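(* Let $\rho_{AB}$ be a state on $H_A\otimes H_B$ (finite-dimensional), and let $\rho_{BA}$ denote the same state with tensor factors ordered $B,A$. Consider $\rho_{BA}\otimes\rho_{AB}$ on $H_{B}\otimes H_{A}\otimes H_{A}\otimes H_{B}$, with the nonbilocality measure taken with respect to the two middle factors $H_A\otimes H_A$. Then $N_H^b(\rho_{BA}\otimes\rho_{AB})\ge N_H(\rho_{AB})$; in particular, $N_H(\rho_{AB})>0$ implies $N_H^b(\rho_{BA}\otimes\rho_{AB})>0$.
   Context: $\|X\|=\sqrt{\mathrm{tr}(X^\dagger X)}$ is the Hilbert–Schmidt norm. The modified measurement-induced nonlocality is $N_H(\rho_{AB})=\max_{\Pi^A}\|\sqrt{\rho_{AB}}-\Pi^A(\sqrt{\rho_{AB}})\|^2$, the maximum over von Neumann measurements $\Pi^A=\{\Pi^A_k\}$ on $H_A$ with $\sum_k\Pi^A_k\rho_A\Pi^A_k=\rho_A$, where $\Pi^A(X)=\sum_k(\Pi^A_k\otimes I^B)X(\Pi^A_k\otimes I^B)$. For a state $\sigma$ on $H_1\otimes H_2\otimes H_3\otimes H_4$ of the form $\sigma=\sigma_{12}\otimes\sigma_{34}$, the nonbilocality measure is $N_H^b(\sigma)=\max_{\Pi^{23}}\|\sqrt{\sigma}-\Pi^{23}(\sqrt\sigma)\|^2$, the maximum over von Neumann measurements $\{\Pi^{23}_h\}$ on $H_2\otimes H_3$ leaving the reduced state $\sigma_{23}$ invariant, with $\Pi^{23}(X)=\sum_h(I\otimes\Pi^{23}_h\otimes I)X(I\otimes\Pi^{23}_h\otimes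 I)$. *)

theory Defs
  imports "Jordan_Normal_Form.Matrix" "HOL-Library.Complex_Order"
begin

definition mtrace :: "complex mat \<Rightarrow> complex" where
  "mtrace A = (\<Sum>i<dim_row A. A $$ (i,i))"

definition adj :: "complex mat \<Rightarrow> complex mat" where
  "adj A = mat (dim_col A) (dim_row A) (\<lambda>(i,j). cnj (A $$ (j,i)))"

definition hermitian_mat :: "nat \<Rightarrow> complex mat \<Rightarrow> bool" where
  "hermitian_mat n A \<longleftrightarrow> A \<in> carrier_mat n n \<and> adj A = A"

definition psd_mat :: "nat \<Rightarrow> complex mat \<Rightarrow> bool" where
  "psd_mat n A \<longleftrightarrow> hermitian_mat n A \<and>
     (\<forall>v \<in> carrier_vec n. (\<Sum>i<n. cnj (v $ i) * (A *\<^sub>v v) $ i) \<ge> 0)"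

definition density_mat :: "nat \<Rightarrow> complex mat \<Rightarrow> bool" where
  "density_mat n A \<longleftrightarrow> psd_mat n A \<and> mtrace A = 1"

definition msqrt :: "nat \<Rightarrow> complex mat \<Rightarrow> complex mat" where
  "msqrt n A = (THE S. psd_mat n S \<and> S * S = A)"

definition hs_norm_sq :: "complex mat \<Rightarrow> real" where
  "hs_norm_sq X = Re (mtrace (adj X * X))"

text \<open>Kronecker (tensor) product; index i of the product corresponds to
  (i div dim B, i mod dim B).\<close>
definition kron :: "complex mat \<Rightarrow> complex mat \<Rightarrow> complex mat" where
  "kron A B = mat (dim_row A * dim_row B) (dim_col A * dim_col B)
     (\<lambda>(i,j). A $$ (i div dim_row B, j div dim_col B) * B $$ (i mod dim_row B, j mod dim_col B))"

text \<open>Reordering the tensor factors: from H_A \<otimes> H_B to H_B \<otimes> H_A.\<close>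
definition swap_mat :: "nat \<Rightarrow> nat \<Rightarrow> complex mat \<Rightarrow> complex mat" where
  "swap_mat dA dB \<rho> = mat (dB * dA) (dB * dA)
     (\<lambda>(i,j). \<rho> $$ ((i mod dA) * dB + i div dA, (j mod dA) * dB + j div dA))"

text \<open>Reduced state on the middle factor of H_1 \<otimes> H_M \<otimes> H_4 (partial trace
  over the outer factors, of dimensions d1 and d4).\<close>
definition reduce_mid :: "nat \<Rightarrow> nat \<Rightarrow> nat \<Rightarrow> complex mat \<Rightarrow> complex mat" where
  "reduce_mid d1 d d4 \<sigma> = mat d d
     (\<lambda>(i,j). \<Sum>a<d1. \<Sum>b<d4. \<sigma> $$ ((a * d + i) * d4 + b, (a * d + j) * d4 + b))"

definition orthonormal_basis :: "nat \<Rightarrow> (nat \<Rightarrow> complex vec) \<Rightarrow> bool" where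
  "orthonormal_basis d u \<longleftrightarrow> (\<forall>k<d. u k \<in> carrier_vec d) \<and>
     (\<forall>k<d. \<forall>l<d. (\<Sum>i<d. cnj (u k $ i) * u l $ i) = (if k = l then 1 else 0))"

definition proj :: "complex vec \<Rightarrow> complex mat" where
  "proj v = mat (dim_vec v) (dim_vec v) (\<lambda>(i,j). v $ i * cnj (v $ j))"

definition vN_measurement :: "nat \<Rightarrow> (nat \<Rightarrow> complex mat) \<Rightarrow> bool" where
  "vN_measurement d P \<longleftrightarrow> (\<exists>u. orthonormal_basis d u \<and> (\<forall>k<d. P k = proj (u k)))"

definition meas_mid :: "nat \<Rightarrow> nat \<Rightarrow> nat \<Rightarrow> (nat \<Rightarrow> complex mat) \<Rightarrow> complex mat \<Rightarrow> complex mat" where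
  "meas_mid d1 d d4 P X =
     (let n = d1 * d * d4 in
      mat n n (\<lambda>(i,j). \<Sum>k<d. (kron (kron (1\<^sub>m d1) (P k)) (1\<^sub>m d4) * X *
                          kron (kron (1\<^sub>m d1) (P k)) (1\<^sub>m d4)) $$ (i,j)))"

text \<open>Modified MIN N_H of a state on H_A \<otimes> H_B (dims dA, dB).
  The maximum is rendered as a supremum (it is attained by compactness).\<close>
definition N_H :: "nat \<Rightarrow> nat \<Rightarrow> complex mat \<Rightarrow> real" where
  "N_H dA dB \<rho> =
     (let S = msqrt (dA * dB) \<rho>; \<rho>A = reduce_mid 1 dA dB \<rho> in
      Sup {hs_norm_sq (S - meas_mid 1 dA dB P S) | P.
             vN_measurement dA P \<and> meas_mid 1 dA 1 P \<rho>A = \<rho>A})"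

definition N_H_b :: "nat \<Rightarrow> nat \<Rightarrow> nat \<Rightarrow> nat \<Rightarrow> complex mat \<Rightarrow> real" where
  "N_H_b d1 d2 d3 d4 \<sigma> =
     (let S = msqrt (d1 * d2 * d3 * d4) \<sigma>; \<sigma>23 = reduce_mid d1 (d2 * d3) d4 \<sigma> in
      Sup {hs_norm_sq (S - meas_mid d1 (d2 * d3) d4 P S) | P.
             vN_measurement (d2 * d3) P \<and> meas_mid 1 (d2 * d3) 1 P \<sigma>23 = \<sigma>23})"

end

theory Submission
  imports Defs "Jordan_Normal_Form.Schur_Decomposition"
begin

text \<open>
  Write \<open>R = \<surd>\<rho>\<^sub>A\<^sub>B\<close>.  By uniqueness of positive square roots, \<open>\<surd>(\<rho>\<^sub>B\<^sub>A \<otimes> \<rho>\<^sub>A\<^sub>B) = X \<otimes> R\<close>, where \<open>X\<close>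
  is \<open>R\<close> with its tensor factors reordered, so \<open>\<parallel>X\<parallel>\<^sup>2 = tr \<rho> = 1\<close>.  Let \<open>\<Pi>\<close> be a von Neumann
  measurement on \<open>H\<^sub>A\<close> in a basis \<open>u\<close> that leaves \<open>\<rho>\<^sub>A\<close> invariant.  Measuring \<open>H\<^sub>A \<otimes> H\<^sub>A\<close> in the
  product basis \<open>u\<^sub>k \<otimes> u\<^sub>l\<close> leaves \<open>\<rho>\<^sub>A \<otimes> \<rho>\<^sub>A\<close> invariant and maps \<open>X \<otimes> R\<close> to \<open>\<Pi>(X) \<otimes> \<Pi>(R)\<close>, so the
  disturbance of \<open>X \<otimes> R\<close> is \<open>X \<otimes> (R - \<Pi>(R)) + (X - \<Pi>(X)) \<otimes> \<Pi>(R)\<close>.  A measurement channel is the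
  Hilbert--Schmidt orthogonal projection onto the operators block-diagonal for the measurement, so
  \<open>R - \<Pi>(R) \<bottom> \<Pi>(R)\<close>; the two summands are therefore orthogonal and the bilocal disturbance is
  \<open>\<parallel>X\<parallel>\<^sup>2 \<parallel>R - \<Pi>(R)\<parallel>\<^sup>2 + \<parallel>(X - \<Pi>(X)) \<otimes> \<Pi>(R)\<parallel>\<^sup>2 \<ge> \<parallel>R - \<Pi>(R)\<parallel>\<^sup>2\<close>.  Taking suprema gives the
  claim: both sets of disturbances are bounded by the squared norm of the square root, and the
  measurement in an eigenbasis of \<open>\<rho>\<^sub>A\<close> leaves \<open>\<rho>\<^sub>A\<close> invariant, so the local one is nonempty.
\<close>

declare index_mult_mat_vec[simp del] index_mult_mat(1)[simp del]

lemma sum_eq_single: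
  assumes "finite A" "a \<in> A" "\<And>x. x \<in> A \<Longrightarrow> x \<noteq> a \<Longrightarrow> f x = 0"
  shows "sum f A = f a"
proof -
  have "sum f A = f a + sum f (A - {a})" using assms by (simp add: sum.remove)
  also have "sum f (A - {a}) = 0" using assms by (intro sum.neutral) auto
  finally show ?thesis by simp
qed

lemma sum_lessThan_mult:
  fixes m n :: nat
  shows "(\<Sum>i<m * n. f i) = (\<Sum>x<m. \<Sum>y<n. f (x * n + y))"
proof -
  have "(\<Sum>i<m * n. f i) = (\<Sum>x<m. \<Sum>i\<in>{x * n..<x * n + n}. f i)" by (simp only: sum.nat_group)
  also have "\<dots> = (\<Sum>x<m. \<Sum>y<n. f (x * n + y))"
  proof (rule sum.cong[OF refl])
    fix x
    show "(\<Sum>i\<in>{x * n..<x * n + n}. f i) = (\<Sum>y<n. f (x * n + y))"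
      using sum.shift_bounds_nat_ivl[of f 0 "x * n" n] by (simp add: atLeast0LessThan add.commute)
  qed
  finally show ?thesis .
qed

lemma sum_swap_inner:
  "(\<Sum>x\<in>A. \<Sum>y\<in>B. \<Sum>z\<in>C. f x y z) = (\<Sum>y\<in>B. \<Sum>z\<in>C. \<Sum>x\<in>A. f x y z)"
  by (subst sum.swap) (rule sum.cong[OF refl], rule sum.swap)

lemma mult_add_less_mult:
  fixes x y m n :: nat
  assumes "x < m" "y < n"
  shows "x * n + y < m * n"
proof -
  have "x * n + y < (x + 1) * n" using assms by simp
  also have "\<dots> \<le> m * n" using assms by (intro mult_right_mono) auto
  finally show ?thesis .
qed

lemma mixed_radix_cases:
  fixes i m n :: nat
  assumes "i < m * n"
  obtains x y where "x < m" "y < n" "i = x * n + y"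
proof
  have n: "n > 0" using assms by (cases n) auto
  show "i div n < m" using assms by (simp add: less_mult_imp_div_less)
  show "i mod n < n" using n by simp
  show "i = i div n * n + i mod n" by simp
qed

lemma index_mult_mat_vec_sum:
  assumes "A \<in> carrier_mat n m" "v \<in> carrier_vec m" "i < n"
  shows "(A *\<^sub>v v) $ i = (\<Sum>j<m. A $$ (i,j) * v $ j)"
  using assms by (auto simp: index_mult_mat_vec scalar_prod_def lessThan_atLeast0 intro!: sum.cong)

lemma index_mult_mat_sum:
  assumes "A \<in> carrier_mat n m" "B \<in> carrier_mat m p" "i < n" "j < p"
  shows "(A * B) $$ (i,j) = (\<Sum>k<m. A $$ (i,k) * B $$ (k,j))"
  using assms by (auto simp: index_mult_mat scalar_prod_def lessThan_atLeast0 intro!: sum.cong)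

lemma index_adj: "i < dim_col A \<Longrightarrow> j < dim_row A \<Longrightarrow> adj A $$ (i,j) = cnj (A $$ (j,i))"
  by (simp add: adj_def)

lemma dim_adj [simp]: "dim_row (adj A) = dim_col A" "dim_col (adj A) = dim_row A"
  by (simp_all add: adj_def)

lemma hermitian_mat_carrier: "hermitian_mat n A \<Longrightarrow> A \<in> carrier_mat n n"
  by (simp add: hermitian_mat_def)

lemma hermitian_mat_index:
  assumes "hermitian_mat n A" "i < n" "j < n"
  shows "A $$ (j,i) = cnj (A $$ (i,j))"
proof -
  have A: "A \<in> carrier_mat n n" "adj A = A" using assms(1) by (auto simp: hermitian_mat_def)
  have "adj A $$ (j,i) = cnj (A $$ (i,j))" using A assms by (intro index_adj) auto
  then show ?thesis using A(2) by simp
qed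

lemma hermitian_matI:
  assumes "A \<in> carrier_mat n n" "\<And>i j. i < n \<Longrightarrow> j < n \<Longrightarrow> A $$ (j,i) = cnj (A $$ (i,j))"
  shows "hermitian_mat n A"
proof -
  have "adj A = A"
  proof (rule eq_matI)
    fix i j assume "i < dim_row A" "j < dim_col A"
    then show "adj A $$ (i,j) = A $$ (i,j)" using assms(1) assms(2)[of j i] by (simp add: index_adj)
  qed (use assms(1) in auto)
  then show ?thesis using assms(1) by (simp add: hermitian_mat_def)
qed

lemma hermitian_mat_diff:
  assumes A: "hermitian_mat n A" and B: "hermitian_mat n B"
  shows "hermitian_mat n (A - B)"
proof (rule hermitian_matI)
  show "A - B \<in> carrier_mat n n" using hermitian_mat_carrier[OF B] by (rule minus_carrier_mat)
  fix i j assume "i < n" "j < n"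
  then show "(A - B) $$ (j,i) = cnj ((A - B) $$ (i,j))"
    using hermitian_mat_index[OF A, of i j] hermitian_mat_index[OF B, of i j]
      hermitian_mat_carrier[OF A] hermitian_mat_carrier[OF B]
    by simp
qed

lemma vec_eq_if_diff_zero:
  fixes x y :: "complex vec"
  assumes "x \<in> carrier_vec n" "y \<in> carrier_vec n" "x - y = 0\<^sub>v n"
  shows "x = y"
proof (rule eq_vecI)
  fix i assume i: "i < dim_vec y"
  have "(x - y) $ i = 0\<^sub>v n $ i" by (simp only: assms(3))
  then show "x $ i = y $ i" using assms(1,2) i by simp
qed (use assms in auto)

definition cinner :: "nat \<Rightarrow> complex vec \<Rightarrow> complex vec \<Rightarrow> complex" where
  "cinner n u v = (\<Sum>i<n. cnj (u $ i) * v $ i)"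

lemma orthonormal_basis_cinner:
  "orthonormal_basis n u \<longleftrightarrow> (\<forall>k<n. u k \<in> carrier_vec n) \<and>
     (\<forall>k<n. \<forall>l<n. cinner n (u k) (u l) = (if k = l then 1 else 0))"
  by (simp add: orthonormal_basis_def cinner_def)

lemma cinner_diff_right:
  "x \<in> carrier_vec n \<Longrightarrow> y \<in> carrier_vec n \<Longrightarrow> cinner n u (x - y) = cinner n u x - cinner n u y"
  by (auto simp: cinner_def algebra_simps sum_subtractf)

lemma cinner_scale_right: "x \<in> carrier_vec n \<Longrightarrow> cinner n u (c \<cdot>\<^sub>v x) = c * cinner n u x"
  by (auto simp: cinner_def sum_distrib_left intro!: sum.cong)

lemma cinner_scale_left: "x \<in> carrier_vec n \<Longrightarrow> cinner n (c \<cdot>\<^sub>v x) y = cnj c * cinner n x y"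
  by (auto simp: cinner_def sum_distrib_left intro!: sum.cong)

lemma cinner_commute: "cinner n x y = cnj (cinner n y x)"
  by (simp add: cinner_def mult.commute)

lemma cinner_self: "cinner n x x = of_real (\<Sum>i<n. (cmod (x $ i))\<^sup>2)"
  unfolding cinner_def of_real_sum
  by (rule sum.cong) (simp_all add: complex_norm_square mult.commute del: of_real_power)

lemma sum_cmod_sq_pos:
  assumes "x \<in> carrier_vec n" "x \<noteq> 0\<^sub>v n"
  shows "(\<Sum>i<n. (cmod (x $ i))\<^sup>2) > 0"
proof -
  obtain i where i: "i < n" "x $ i \<noteq> 0" using assms by (metis eq_vecI carrier_vecD index_zero_vec)
  have "(\<Sum>i<n. (cmod (x $ i))\<^sup>2) \<ge> (cmod (x $ i))\<^sup>2"
    by (rule member_le_sum) (use i in auto)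
  moreover have "(cmod (x $ i))\<^sup>2 > 0" using i by simp
  ultimately show ?thesis by linarith
qed

lemma hermitian_cinner:
  assumes H: "hermitian_mat n A" and u: "u \<in> carrier_vec n" and v: "v \<in> carrier_vec n"
  shows "cinner n u (A *\<^sub>v v) = cinner n (A *\<^sub>v u) v"
proof -
  have A: "A \<in> carrier_mat n n" using H by (rule hermitian_mat_carrier)
  have "cinner n u (A *\<^sub>v v) = (\<Sum>i<n. \<Sum>j<n. cnj (u $ i) * A $$ (i,j) * v $ j)"
    unfolding cinner_def
    by (simp add: index_mult_mat_vec_sum[OF A v] sum_distrib_left mult.assoc)
  also have "\<dots> = (\<Sum>j<n. \<Sum>i<n. cnj (A $$ (j,i) * u $ i) * v $ j)"
  proof (subst sum.swap, intro sum.cong refl)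
    fix i j assume "i \<in> {..<n}" "j \<in> {..<n}"
    then have "A $$ (j,i) = cnj (A $$ (i,j))" by (intro hermitian_mat_index[OF H]) auto
    then show "cnj (u $ i) * A $$ (i,j) * v $ j = cnj (A $$ (j,i) * u $ i) * v $ j" by simp
  qed
  also have "\<dots> = cinner n (A *\<^sub>v u) v"
    unfolding cinner_def
    by (simp add: index_mult_mat_vec_sum[OF A u] sum_distrib_right)
  finally show ?thesis .
qed

section \<open>The spectral theorem for Hermitian matrices\<close>

fun shift_chain :: "complex mat \<Rightarrow> complex list \<Rightarrow> complex vec \<Rightarrow> complex vec" where
  "shift_chain A [] v = v"
| "shift_chain A (e # es) v = A *\<^sub>v shift_chain A es v - e \<cdot>\<^sub>v shift_chain A es v"

lemma shift_chain_carrier: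
  "A \<in> carrier_mat n n \<Longrightarrow> v \<in> carrier_vec n \<Longrightarrow> shift_chain A es v \<in> carrier_vec n"
  by (induction es) auto

lemma shift_chain_similar:
  assumes P: "P \<in> carrier_mat n n" and B: "B \<in> carrier_mat n n" and Q: "Q \<in> carrier_mat n n"
    and QP: "Q * P = 1\<^sub>m n" and PQ: "P * Q = 1\<^sub>m n" and v: "v \<in> carrier_vec n"
  shows "shift_chain (P * B * Q) es v = P *\<^sub>v shift_chain B es (Q *\<^sub>v v)"
proof (induction es)
  case Nil
  have "P *\<^sub>v (Q *\<^sub>v v) = (P * Q) *\<^sub>v v" by (rule assoc_mult_mat_vec[OF P Q v, symmetric])
  then show ?case using PQ v by simp
next
  case (Cons e es)
  define z where "z = shift_chain B es (Q *\<^sub>v v)"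
  have z: "z \<in> carrier_vec n" unfolding z_def using B Q v by (simp add: shift_chain_carrier)
  have PBQ: "P * B * Q \<in> carrier_mat n n" using P B Q by simp
  have "(P * B * Q) *\<^sub>v (P *\<^sub>v z) = ((P * B * Q) * P) *\<^sub>v z"
    by (rule assoc_mult_mat_vec[OF PBQ P z, symmetric])
  also have "(P * B * Q) * P = (P * B) * (Q * P)"
    using P B Q by (metis assoc_mult_mat mult_carrier_mat)
  also have "\<dots> = P * B" using QP P B by simp
  also have "(P * B) *\<^sub>v z = P *\<^sub>v (B *\<^sub>v z)" by (rule assoc_mult_mat_vec[OF P B z])
  finally have "(P * B * Q) *\<^sub>v (P *\<^sub>v z) = P *\<^sub>v (B *\<^sub>v z)" .
  moreover have "P *\<^sub>v (B *\<^sub>v z - e \<cdot>\<^sub>v z) = P *\<^sub>v (B *\<^sub>v z) - e \<cdot>\<^sub>v (P *\<^sub>v z)"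
  proof -
    have "B *\<^sub>v z \<in> carrier_vec n" "e \<cdot>\<^sub>v z \<in> carrier_vec n" using B z by auto
    then show ?thesis using mult_minus_distrib_mat_vec[OF P] mult_mat_vec[OF P z] by simp
  qed
  ultimately show ?case using Cons by (simp add: z_def)
qed

lemma shift_chain_upper_triangular:
  assumes B: "B \<in> carrier_mat n n" and ut: "upper_triangular B" and dg: "diag_mat B = es"
    and z: "z \<in> carrier_vec n"
  shows "j \<le> r \<Longrightarrow> r < n \<Longrightarrow> shift_chain B (drop j es) z $ r = 0"
proof (induction "n - j" arbitrary: j r)
  case 0
  then show ?case by simp
next
  case (Suc x)
  have len: "length es = n" using dg B by (auto simp: diag_mat_def)
  have jn: "j < n" using Suc by simp
  have ej: "es ! j = B $$ (j,j)" using dg B jn by (auto simp: diag_mat_def)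
  have dr: "drop j es = es ! j # drop (Suc j) es" using jn len by (simp add: Cons_nth_drop_Suc)
  define y where "y = shift_chain B (drop (Suc j) es) z"
  have y: "y \<in> carrier_vec n" unfolding y_def using B z by (rule shift_chain_carrier)
  have IH: "\<And>s. Suc j \<le> s \<Longrightarrow> s < n \<Longrightarrow> y $ s = 0"
    unfolding y_def using Suc by (intro Suc.hyps) auto
  have "(B *\<^sub>v y) $ r = (\<Sum>s<n. B $$ (r,s) * y $ s)"
    using B y Suc by (simp add: index_mult_mat_vec_sum)
  also have "\<dots> = B $$ (r,r) * y $ r"
  proof (rule sum_eq_single)
    fix s assume s: "s \<in> {..<n}" "s \<noteq> r"
    show "B $$ (r,s) * y $ s = 0"
    proof (cases "s < r")
      case True
      then show ?thesis using upper_triangularD[OF ut True] Suc B by simp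
    next
      case False
      then show ?thesis using IH s Suc by simp
    qed
  qed (use Suc in auto)
  finally have By: "(B *\<^sub>v y) $ r = B $$ (r,r) * y $ r" .
  then show ?case
  proof (cases "r = j")
    case True
    then show ?thesis unfolding dr using By ej y Suc B by (simp add: y_def)
  next
    case False
    then have "y $ r = 0" using IH Suc by auto
    then show ?thesis unfolding dr using By ej y Suc B by (simp add: y_def)
  qed
qed

text \<open>Cayley--Hamilton in the form needed here, read off a Schur triangularisation.\<close>

lemma shift_chain_char_poly:
  assumes A: "A \<in> carrier_mat n n" and cp: "char_poly A = (\<Prod>a\<leftarrow>es. [:- a, 1:])"
    and v: "v \<in> carrier_vec n"
  shows "shift_chain A es v = 0\<^sub>v n"
proof -
  obtain B P Q where sd: "schur_decomposition A es = (B,P,Q)"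
    by (cases "schur_decomposition A es") auto
  from schur_decomposition[OF A cp sd] have sim: "similar_mat_wit A B P Q"
    and ut: "upper_triangular B" and dg: "diag_mat B = es" by auto
  from sim A have P: "P \<in> carrier_mat n n" and B: "B \<in> carrier_mat n n" and Q: "Q \<in> carrier_mat n n"
    and PQ: "P * Q = 1\<^sub>m n" and QP: "Q * P = 1\<^sub>m n" and APBQ: "A = P * B * Q"
    unfolding similar_mat_wit_def Let_def by auto
  have Qv: "Q *\<^sub>v v \<in> carrier_vec n" using Q v by simp
  have "shift_chain B es (Q *\<^sub>v v) = 0\<^sub>v n"
    using shift_chain_upper_triangular[OF B ut dg Qv, of 0] shift_chain_carrier[OF B Qv]
    by (intro eq_vecI) auto
  then have "shift_chain A es v = P *\<^sub>v 0\<^sub>v n"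
    unfolding APBQ shift_chain_similar[OF P B Q QP PQ v] by simp
  also have "\<dots> = 0\<^sub>v n" using P by (intro eq_vecI) (auto simp: index_mult_mat_vec_sum)
  finally show ?thesis .
qed

text \<open>Walking down the chain \<open>(A - e\<^sub>1) \<cdots> (A - e\<^sub>n) v = 0\<close>, the last nonzero vector is an
  eigenvector, and it stays in every subspace invariant under all the shifts \<open>A - e\<close>.\<close>

lemma eigenvector_in_invariant_subspace:
  fixes A :: "complex mat"
  assumes A: "A \<in> carrier_mat n n" and V: "V \<subseteq> carrier_vec n"
    and V_invariant: "\<And>v e. v \<in> V \<Longrightarrow> A *\<^sub>v v - e \<cdot>\<^sub>v v \<in> V"
    and v: "v \<in> V" and v0: "v \<noteq> 0\<^sub>v n"
  obtains w \<mu> where "w \<in> V" "w \<noteq> 0\<^sub>v n" "A *\<^sub>v w = \<mu> \<cdot>\<^sub>v w"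
proof -
  obtain es where cp: "char_poly A = (\<Prod>a\<leftarrow>es. [:- a, 1:])" and len: "length es = n"
    using char_poly_factorized[OF A] by blast
  define z where "z j = shift_chain A (drop j es) v" for j
  have zV: "z j \<in> V" for j
  proof -
    have "shift_chain A fs v \<in> V" for fs by (induction fs) (auto simp: v V_invariant)
    then show ?thesis by (simp add: z_def)
  qed
  have z0: "z 0 = 0\<^sub>v n"
    unfolding z_def using shift_chain_char_poly[OF A cp] v V by auto
  have "\<exists>w\<in>V. w \<noteq> 0\<^sub>v n \<and> (\<exists>\<mu>. A *\<^sub>v w = \<mu> \<cdot>\<^sub>v w)" if "j \<le> n" "z j \<noteq> 0\<^sub>v n" for j
    using that
  proof (induction j)
    case 0
    then show ?case using z0 by simp
  next
    case (Suc j)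
    show ?case
    proof (cases "z j = 0\<^sub>v n")
      case True
      have "drop j es = es ! j # drop (Suc j) es" using Suc len by (simp add: Cons_nth_drop_Suc)
      then have diff: "A *\<^sub>v z (Suc j) - (es ! j) \<cdot>\<^sub>v z (Suc j) = 0\<^sub>v n"
        using True by (simp add: z_def)
      have "z (Suc j) \<in> carrier_vec n" using zV V by auto
      then have "A *\<^sub>v z (Suc j) = (es ! j) \<cdot>\<^sub>v z (Suc j)"
        using A by (intro vec_eq_if_diff_zero[OF _ _ diff]) auto
      then show ?thesis using zV[of "Suc j"] Suc by blast
    next
      case False
      then show ?thesis using Suc by simp
    qed
  qed
  moreover have "z n = v" by (simp add: z_def len)
  ultimately have "\<exists>w\<in>V. w \<noteq> 0\<^sub>v n \<and> (\<exists>\<mu>. A *\<^sub>v w = \<mu> \<cdot>\<^sub>v w)" using v0 by auto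
  then show ?thesis using that by blast
qed

lemma exists_orthogonal_nonzero:
  assumes kn: "k < n" and u: "\<And>i. i < k \<Longrightarrow> u i \<in> carrier_vec n"
    and on: "\<And>i j. i < k \<Longrightarrow> j < k \<Longrightarrow> cinner n (u i) (u j) = (if i = j then 1 else 0)"
  obtains v where "v \<in> carrier_vec n" "v \<noteq> 0\<^sub>v n" "\<And>i. i < k \<Longrightarrow> cinner n (u i) v = 0"
proof (rule ccontr)
  note found = that
  assume nex: "\<not> thesis"
  define e where "e j = vec n (\<lambda>r. (if r = j then 1 else 0) - (\<Sum>i<k. cnj (u i $ j) * u i $ r))" for j
  have orth: "cinner n (u l) (e j) = 0" if l: "l < k" and j: "j < n" for l j
  proof -
    have "cinner n (u l) (e j) = (\<Sum>r<n. cnj (u l $ r) * (if r = j then 1 else 0))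
        - (\<Sum>r<n. \<Sum>i<k. cnj (u i $ j) * (cnj (u l $ r) * u i $ r))"
      unfolding cinner_def e_def
      by (simp add: right_diff_distrib sum_subtractf sum_distrib_left mult.left_commute)
    also have "(\<Sum>r<n. cnj (u l $ r) * (if r = j then 1 else 0)) = cnj (u l $ j)"
      using j by (simp add: if_distrib cong: if_cong)
    also have "(\<Sum>r<n. \<Sum>i<k. cnj (u i $ j) * (cnj (u l $ r) * u i $ r))
        = (\<Sum>i<k. cnj (u i $ j) * cinner n (u l) (u i))"
      unfolding cinner_def by (subst sum.swap) (simp add: sum_distrib_left)
    also have "\<dots> = (\<Sum>i<k. if i = l then cnj (u l $ j) else 0)"
      by (intro sum.cong refl) (use l on in auto)
    also have "\<dots> = cnj (u l $ j)" using l by simp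
    finally show ?thesis by simp
  qed
  have "e j \<in> carrier_vec n" for j by (simp add: e_def)
  then have zero: "e j = 0\<^sub>v n" if "j < n" for j
    using nex found orth that by blast
  have diag: "(\<Sum>i<k. cnj (u i $ j) * u i $ j) = 1" if j: "j < n" for j
  proof -
    have "e j $ j = 0" using zero[OF j] j by simp
    then show ?thesis using j by (simp add: e_def)
  qed
  have "of_nat n = (\<Sum>j<n. \<Sum>i<k. cnj (u i $ j) * u i $ j)" using diag by simp
  also have "\<dots> = (\<Sum>i<k. cinner n (u i) (u i))" unfolding cinner_def by (rule sum.swap)
  also have "\<dots> = of_nat k" using on by simp
  finally show False using kn by (simp add: of_nat_eq_iff)
qed

lemma hermitian_eigenvalue_real:
  assumes H: "hermitian_mat n A" and w: "w \<in> carrier_vec n" "w \<noteq> 0\<^sub>v n"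
    and Aw: "A *\<^sub>v w = \<mu> \<cdot>\<^sub>v w"
  shows "\<mu> = of_real (Re \<mu>)"
proof -
  have "cinner n w w \<noteq> 0"
    using sum_cmod_sq_pos[OF w] unfolding cinner_self of_real_eq_0_iff by linarith
  moreover have "\<mu> * cinner n w w = cnj \<mu> * cinner n w w"
    using hermitian_cinner[OF H w(1) w(1)] Aw w by (simp add: cinner_scale_left cinner_scale_right)
  ultimately have "cnj \<mu> = \<mu>" by simp
  then show ?thesis by (simp add: complex_eq_iff)
qed

lemma cinner_normalize:
  assumes w: "w \<in> carrier_vec n" "w \<noteq> 0\<^sub>v n"
  defines "c \<equiv> of_real (1 / sqrt (\<Sum>i<n. (cmod (w $ i))\<^sup>2))"
  shows "cinner n (c \<cdot>\<^sub>v w) (c \<cdot>\<^sub>v w) = 1"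
proof -
  define s where "s = (\<Sum>i<n. (cmod (w $ i))\<^sup>2)"
  have s: "s > 0" unfolding s_def by (rule sum_cmod_sq_pos[OF w])
  have "cinner n (c \<cdot>\<^sub>v w) (c \<cdot>\<^sub>v w) = cnj c * c * cinner n w w"
    using w by (simp add: cinner_scale_left cinner_scale_right)
  also have "\<dots> = of_real ((1 / sqrt s) * (1 / sqrt s) * s)"
    by (simp only: c_def s_def cinner_self complex_cnj_complex_of_real of_real_mult)
  also have "(1 / sqrt s) * (1 / sqrt s) * s = 1" using s by (simp add: field_simps)
  finally show ?thesis by simp
qed

lemma hermitian_unit_eigenvector_orthogonal:
  assumes H: "hermitian_mat n A" and kn: "k < n"
    and u: "\<And>i. i < k \<Longrightarrow> u i \<in> carrier_vec n"
    and on: "\<And>i j. i < k \<Longrightarrow> j < k \<Longrightarrow> cinner n (u i) (u j) = (if i = j then 1 else 0)"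
    and ev: "\<And>i. i < k \<Longrightarrow> A *\<^sub>v u i = of_real (l i) \<cdot>\<^sub>v u i"
  obtains w and \<mu> :: real where "w \<in> carrier_vec n" "cinner n w w = 1"
    "\<And>i. i < k \<Longrightarrow> cinner n (u i) w = 0" "A *\<^sub>v w = of_real \<mu> \<cdot>\<^sub>v w"
proof -
  have A: "A \<in> carrier_mat n n" using H by (rule hermitian_mat_carrier)
  define V where "V = {v \<in> carrier_vec n. \<forall>i<k. cinner n (u i) v = 0}"
  have V_invariant: "A *\<^sub>v v - e \<cdot>\<^sub>v v \<in> V" if v: "v \<in> V" for v e
  proof -
    have "cinner n (u i) (A *\<^sub>v v) = of_real (l i) * cinner n (u i) v" if i: "i < k" for i
      using hermitian_cinner[OF H, of "u i" v] ev u v i A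
      by (simp add: V_def cinner_scale_left)
    then show ?thesis using v A by (simp add: V_def cinner_diff_right cinner_scale_right)
  qed
  obtain v0 where "v0 \<in> carrier_vec n" "v0 \<noteq> 0\<^sub>v n" "\<And>i. i < k \<Longrightarrow> cinner n (u i) v0 = 0"
    using exists_orthogonal_nonzero[OF kn u on] by blast
  moreover have "V \<subseteq> carrier_vec n" by (auto simp: V_def)
  ultimately obtain w \<mu> where wV: "w \<in> V" and w0: "w \<noteq> 0\<^sub>v n" and Aw: "A *\<^sub>v w = \<mu> \<cdot>\<^sub>v w"
    using eigenvector_in_invariant_subspace[OF A _ V_invariant, of v0] by (auto simp: V_def)
  have w: "w \<in> carrier_vec n" using wV by (simp add: V_def)
  define c :: complex where "c = of_real (1 / sqrt (\<Sum>i<n. (cmod (w $ i))\<^sup>2))"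
  have "cinner n (c \<cdot>\<^sub>v w) (c \<cdot>\<^sub>v w) = 1" unfolding c_def by (rule cinner_normalize[OF w w0])
  moreover have "cinner n (u i) (c \<cdot>\<^sub>v w) = 0" if "i < k" for i
    using wV that w by (simp add: V_def cinner_scale_right)
  moreover have "A *\<^sub>v (c \<cdot>\<^sub>v w) = of_real (Re \<mu>) \<cdot>\<^sub>v (c \<cdot>\<^sub>v w)"
    using mult_mat_vec[OF A w] Aw hermitian_eigenvalue_real[OF H w w0 Aw]
    by (simp add: smult_smult_assoc mult.commute)
  ultimately show ?thesis using that[of "c \<cdot>\<^sub>v w" "Re \<mu>"] w by auto
qed

lemma hermitian_orthonormal_eigenvectors:
  assumes H: "hermitian_mat n A"
  shows "k \<le> n \<Longrightarrow> \<exists>u (l::nat \<Rightarrow> real). (\<forall>i<k. u i \<in> carrier_vec n)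
     \<and> (\<forall>i<k. \<forall>j<k. cinner n (u i) (u j) = (if i = j then 1 else 0))
     \<and> (\<forall>i<k. A *\<^sub>v u i = of_real (l i) \<cdot>\<^sub>v u i)"
proof (induction k)
  case 0
  show ?case by auto
next
  case (Suc k)
  from Suc obtain u and l :: "nat \<Rightarrow> real" where u: "\<forall>i<k. u i \<in> carrier_vec n"
    and on: "\<forall>i<k. \<forall>j<k. cinner n (u i) (u j) = (if i = j then 1 else 0)"
    and ev: "\<forall>i<k. A *\<^sub>v u i = of_real (l i) \<cdot>\<^sub>v u i" by auto
  obtain w \<mu> where w: "w \<in> carrier_vec n" "cinner n w w = 1"
    and uw: "\<And>i. i < k \<Longrightarrow> cinner n (u i) w = 0" and Aw: "A *\<^sub>v w = of_real \<mu> \<cdot>\<^sub>v w"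
    using hermitian_unit_eigenvector_orthogonal[OF H, of k u l] Suc.prems u on ev by auto
  have wu: "cinner n w (u i) = 0" if "i < k" for i
    using uw[OF that] cinner_commute[of n w "u i"] by simp
  define u' where "u' = u(k := w)"
  define l' where "l' = l(k := \<mu>)"
  have "\<forall>i<Suc k. u' i \<in> carrier_vec n" using u w unfolding u'_def by (auto simp: less_Suc_eq)
  moreover have "\<forall>i<Suc k. \<forall>j<Suc k. cinner n (u' i) (u' j) = (if i = j then 1 else 0)"
    using on w uw wu unfolding u'_def by (auto simp: less_Suc_eq)
  moreover have "\<forall>i<Suc k. A *\<^sub>v u' i = of_real (l' i) \<cdot>\<^sub>v u' i"
    using ev Aw unfolding u'_def l'_def by (auto simp: less_Suc_eq)
  ultimately show ?case by blast
qed

lemma hermitian_eigenbasis: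
  assumes "hermitian_mat n A"
  obtains u and l :: "nat \<Rightarrow> real"
  where "orthonormal_basis n u" "\<And>k. k < n \<Longrightarrow> A *\<^sub>v u k = of_real (l k) \<cdot>\<^sub>v u k"
  using hermitian_orthonormal_eigenvectors[OF assms, of n] unfolding orthonormal_basis_cinner
  by auto

lemma orthonormal_basis_complete:
  assumes ob: "orthonormal_basis n u" and i: "i < n" and j: "j < n"
  shows "(\<Sum>k<n. u k $ i * cnj (u k $ j)) = (if i = j then 1 else 0)"
proof -
  define U where "U = mat n n (\<lambda>(i,k). u k $ i)"
  define Uh where "Uh = mat n n (\<lambda>(k,i). cnj (u k $ i))"
  have U: "U \<in> carrier_mat n n" and Uh: "Uh \<in> carrier_mat n n" unfolding U_def Uh_def by auto
  have "Uh * U = 1\<^sub>m n"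
  proof (rule eq_matI)
    fix k l assume kl: "k < dim_row (1\<^sub>m n :: complex mat)" "l < dim_col (1\<^sub>m n :: complex mat)"
    then have "(Uh * U) $$ (k,l) = (\<Sum>i<n. Uh $$ (k,i) * U $$ (i,l))"
      by (intro index_mult_mat_sum[OF Uh U]) auto
    then show "(Uh * U) $$ (k,l) = 1\<^sub>m n $$ (k,l)"
      using ob kl by (simp add: U_def Uh_def orthonormal_basis_def)
  qed (use U Uh in auto)
  then have "U * Uh = 1\<^sub>m n" by (rule mat_mult_left_right_inverse[OF Uh U])
  moreover have "(U * Uh) $$ (i,j) = (\<Sum>k<n. U $$ (i,k) * Uh $$ (k,j))"
    by (rule index_mult_mat_sum[OF U Uh i j])
  ultimately show ?thesis using i j by (simp add: U_def Uh_def)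
qed

lemma eigenbasis_expansion:
  assumes A: "A \<in> carrier_mat n n" and ob: "orthonormal_basis n u"
    and ev: "\<And>k. k < n \<Longrightarrow> A *\<^sub>v u k = of_real (l k) \<cdot>\<^sub>v u k"
    and i: "i < n" and j: "j < n"
  shows "A $$ (i,j) = (\<Sum>k<n. of_real (l k) * u k $ i * cnj (u k $ j))"
proof -
  have u: "u k \<in> carrier_vec n" if "k < n" for k using ob that unfolding orthonormal_basis_def by auto
  have "A $$ (i,j) = (\<Sum>m<n. A $$ (i,m) * (if m = j then 1 else 0))"
    using j by (subst sum_eq_single[where a = j]) auto
  also have "\<dots> = (\<Sum>m<n. A $$ (i,m) * (\<Sum>k<n. u k $ m * cnj (u k $ j)))"
    by (intro sum.cong refl) (simp add: orthonormal_basis_complete[OF ob _ j])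
  also have "\<dots> = (\<Sum>k<n. (\<Sum>m<n. A $$ (i,m) * u k $ m) * cnj (u k $ j))"
    by (simp add: sum_distrib_left sum_distrib_right mult.assoc) (rule sum.swap)
  also have "\<dots> = (\<Sum>k<n. (A *\<^sub>v u k) $ i * cnj (u k $ j))"
    by (intro sum.cong refl) (simp add: index_mult_mat_vec_sum[OF A u i])
  also have "\<dots> = (\<Sum>k<n. of_real (l k) * u k $ i * cnj (u k $ j))"
  proof (intro sum.cong refl)
    fix k assume "k \<in> {..<n}"
    moreover from this have "dim_vec (u k) = n" using u by auto
    ultimately show "(A *\<^sub>v u k) $ i * cnj (u k $ j) = of_real (l k) * u k $ i * cnj (u k $ j)"
      using ev i by simp
  qed
  finally show ?thesis .
qed

section \<open>Positive semidefinite matrices and their square roots\<close>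

text \<open>Rank-one decompositions with nonnegative weights characterise positive semidefiniteness
  (by the spectral theorem) and, unlike positivity itself, pass directly through tensor products
  and reorderings of tensor factors.\<close>

definition rank_one_sum ::
    "nat \<Rightarrow> complex mat \<Rightarrow> 'k set \<Rightarrow> ('k \<Rightarrow> real) \<Rightarrow> ('k \<Rightarrow> nat \<Rightarrow> complex) \<Rightarrow> bool" where
  "rank_one_sum n M K c w \<longleftrightarrow> M \<in> carrier_mat n n \<and> finite K \<and> (\<forall>k\<in>K. c k \<ge> 0) \<and>
     (\<forall>i<n. \<forall>j<n. M $$ (i,j) = (\<Sum>k\<in>K. of_real (c k) * w k i * cnj (w k j)))"

lemma rank_one_sum_mult_vec:
  assumes M: "rank_one_sum n M K c w" and v: "v \<in> carrier_vec n" and i: "i < n"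
  shows "(M *\<^sub>v v) $ i = (\<Sum>k\<in>K. of_real (c k) * w k i * (\<Sum>j<n. cnj (w k j) * v $ j))"
proof -
  have Mc: "M \<in> carrier_mat n n" using M by (simp add: rank_one_sum_def)
  have "(M *\<^sub>v v) $ i = (\<Sum>j<n. (\<Sum>k\<in>K. of_real (c k) * w k i * cnj (w k j)) * v $ j)"
    unfolding index_mult_mat_vec_sum[OF Mc v i] using M i by (simp add: rank_one_sum_def)
  also have "\<dots> = (\<Sum>k\<in>K. \<Sum>j<n. of_real (c k) * w k i * (cnj (w k j) * v $ j))"
    by (simp add: sum_distrib_right mult.assoc) (rule sum.swap)
  finally show ?thesis by (simp add: sum_distrib_left)
qed

lemma rank_one_sum_quadratic_form:
  assumes M: "rank_one_sum n M K c w" and v: "v \<in> carrier_vec n"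
  shows "cinner n v (M *\<^sub>v v) = of_real (\<Sum>k\<in>K. c k * (cmod (\<Sum>j<n. cnj (w k j) * v $ j))\<^sup>2)"
proof -
  define g where "g k = (\<Sum>j<n. cnj (w k j) * v $ j)" for k
  have "cinner n v (M *\<^sub>v v) = (\<Sum>i<n. \<Sum>k\<in>K. of_real (c k) * (cnj (v $ i) * w k i) * g k)"
    unfolding cinner_def g_def
    by (intro sum.cong refl) (simp add: rank_one_sum_mult_vec[OF M v] sum_distrib_left ac_simps)
  also have "\<dots> = (\<Sum>k\<in>K. of_real (c k) * cnj (g k) * g k)"
    by (subst sum.swap) (simp add: g_def sum_distrib_left sum_distrib_right mult.commute)
  also have "\<dots> = of_real (\<Sum>k\<in>K. c k * (cmod (g k))\<^sup>2)"
    unfolding of_real_sum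
    by (intro sum.cong refl) (simp add: complex_norm_square mult.commute del: of_real_power)
  finally show ?thesis unfolding g_def .
qed

lemma rank_one_sum_psd:
  assumes M: "rank_one_sum n M K c w"
  shows "psd_mat n M"
proof -
  have "hermitian_mat n M"
    using M by (intro hermitian_matI) (auto simp: rank_one_sum_def mult.commute mult.left_commute)
  moreover have "(\<Sum>i<n. cnj (v $ i) * (M *\<^sub>v v) $ i) \<ge> 0" if v: "v \<in> carrier_vec n" for v
  proof -
    have "(\<Sum>k\<in>K. c k * (cmod (\<Sum>j<n. cnj (w k j) * v $ j))\<^sup>2) \<ge> 0"
      using M by (intro sum_nonneg) (auto simp: rank_one_sum_def)
    then show ?thesis
      using rank_one_sum_quadratic_form[OF M v] by (simp add: cinner_def less_eq_complex_def)
  qed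
  ultimately show ?thesis by (simp add: psd_mat_def)
qed

lemma psd_mat_hermitian: "psd_mat n M \<Longrightarrow> hermitian_mat n M"
  by (simp add: psd_mat_def)

lemma psd_mat_carrier: "psd_mat n M \<Longrightarrow> M \<in> carrier_mat n n"
  by (simp add: psd_mat_def hermitian_mat_def)

lemma psd_quadratic_form_nonneg:
  "psd_mat n M \<Longrightarrow> v \<in> carrier_vec n \<Longrightarrow> cinner n v (M *\<^sub>v v) \<ge> 0"
  by (simp add: psd_mat_def cinner_def)

lemma psd_rank_one_sum:
  assumes P: "psd_mat n M"
  obtains u l where "orthonormal_basis n u" "rank_one_sum n M {..<n} l (\<lambda>k i. u k $ i)"
proof -
  obtain u l where ob: "orthonormal_basis n u" and ev: "\<And>k. k < n \<Longrightarrow> M *\<^sub>v u k = of_real (l k) \<cdot>\<^sub>v u k"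
    using hermitian_eigenbasis[OF psd_mat_hermitian[OF P]] by blast
  have u: "u k \<in> carrier_vec n" and uu: "cinner n (u k) (u k) = 1" if "k < n" for k
    using ob that by (auto simp: orthonormal_basis_cinner)
  have "of_real (l k) \<ge> (0 :: complex)" if k: "k < n" for k
    using psd_quadratic_form_nonneg[OF P u[OF k]] ev[OF k] u[OF k] uu[OF k]
    by (simp add: cinner_scale_right)
  then have "rank_one_sum n M {..<n} l (\<lambda>k i. u k $ i)"
    using psd_mat_carrier[OF P] eigenbasis_expansion[OF _ ob ev]
    by (auto simp: rank_one_sum_def less_eq_complex_def)
  then show ?thesis using ob that by blast
qed

lemma psd_quadratic_form_zero:
  assumes P: "psd_mat n M" and v: "v \<in> carrier_vec n" and z: "cinner n v (M *\<^sub>v v) = 0"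
  shows "M *\<^sub>v v = 0\<^sub>v n"
proof -
  obtain u l where M: "rank_one_sum n M {..<n} l (\<lambda>k i. u k $ i)"
    using psd_rank_one_sum[OF P] by blast
  define g where "g k = (\<Sum>j<n. cnj (u k $ j) * v $ j)" for k
  have l: "\<forall>k\<in>{..<n}. l k \<ge> 0" using M by (simp add: rank_one_sum_def)
  have "of_real (\<Sum>k<n. l k * (cmod (g k))\<^sup>2) = (0 :: complex)"
    using rank_one_sum_quadratic_form[OF M v] z unfolding g_def by metis
  then have "(\<Sum>k<n. l k * (cmod (g k))\<^sup>2) = 0" by (simp only: of_real_eq_0_iff)
  then have "\<forall>k\<in>{..<n}. l k * (cmod (g k))\<^sup>2 = 0"
    using l by (subst sum_nonneg_eq_0_iff[symmetric]) auto
  then have "of_real (l k) * g k = 0" if "k < n" for k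
    using that by auto
  then have "(M *\<^sub>v v) $ i = 0" if "i < n" for i
    unfolding rank_one_sum_mult_vec[OF M v that] g_def[symmetric]
    by (intro sum.neutral) (auto simp: mult.commute mult.left_commute)
  then show ?thesis using psd_mat_carrier[OF P] by (intro eq_vecI) auto
qed

lemma orthonormal_expansion_mult:
  assumes ob: "orthonormal_basis n u" and i: "i < n" and j: "j < n"
  shows "(\<Sum>m<n. (\<Sum>k<n. a k * u k $ i * cnj (u k $ m)) * (\<Sum>k<n. b k * u k $ m * cnj (u k $ j)))
       = (\<Sum>k<n. a k * b k * u k $ i * cnj (u k $ j))"
proof -
  have "(\<Sum>m<n. (\<Sum>k<n. a k * u k $ i * cnj (u k $ m)) * (\<Sum>k<n. b k * u k $ m * cnj (u k $ j)))
      = (\<Sum>m<n. \<Sum>k<n. \<Sum>k'<n. (a k * b k' * u k $ i * cnj (u k' $ j)) * (cnj (u k $ m) * u k' $ m))"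
    unfolding sum_product by (intro sum.cong refl) (simp add: ac_simps)
  also have "\<dots> = (\<Sum>k<n. \<Sum>k'<n. (a k * b k' * u k $ i * cnj (u k' $ j)) * cinner n (u k) (u k'))"
    by (subst sum_swap_inner) (simp add: cinner_def sum_distrib_left)
  also have "\<dots> = (\<Sum>k<n. \<Sum>k'<n. (a k * b k' * u k $ i * cnj (u k' $ j)) * (if k = k' then 1 else 0))"
    using ob by (intro sum.cong refl) (simp add: orthonormal_basis_cinner)
  also have "\<dots> = (\<Sum>k<n. a k * b k * u k $ i * cnj (u k $ j))"
    by (intro sum.cong refl) (simp add: if_distrib cong: if_cong)
  finally show ?thesis .
qed

lemma psd_sqrt_exists:
  assumes P: "psd_mat n A"
  obtains S where "psd_mat n S" "S * S = A"
proof -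
  obtain u l where ob: "orthonormal_basis n u" and A: "rank_one_sum n A {..<n} l (\<lambda>k i. u k $ i)"
    using psd_rank_one_sum[OF P] by blast
  have l: "\<And>k. k < n \<Longrightarrow> l k \<ge> 0" using A by (auto simp: rank_one_sum_def)
  define S where "S = mat n n (\<lambda>(i,j). \<Sum>k<n. of_real (sqrt (l k)) * u k $ i * cnj (u k $ j))"
  have S: "S \<in> carrier_mat n n" unfolding S_def by simp
  have "rank_one_sum n S {..<n} (\<lambda>k. sqrt (l k)) (\<lambda>k i. u k $ i)"
    unfolding rank_one_sum_def S_def using l by auto
  moreover have "S * S = A"
  proof (rule eq_matI)
    fix i j assume "i < dim_row A" "j < dim_col A"
    then have i: "i < n" and j: "j < n" using A by (auto simp: rank_one_sum_def)
    have "(S * S) $$ (i,j) = (\<Sum>m<n. S $$ (i,m) * S $$ (m,j))" by (rule index_mult_mat_sum[OF S S i j])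
    also have "\<dots> = (\<Sum>k<n. of_real (sqrt (l k)) * of_real (sqrt (l k)) * u k $ i * cnj (u k $ j))"
      using i j by (simp add: S_def orthonormal_expansion_mult[OF ob i j])
    also have "\<dots> = A $$ (i,j)"
      using A i j l by (auto simp: rank_one_sum_def of_real_mult[symmetric] simp del: of_real_mult intro!: sum.cong)
    finally show "(S * S) $$ (i,j) = A $$ (i,j)" .
  qed (use S A in \<open>auto simp: rank_one_sum_def\<close>)
  ultimately show ?thesis using rank_one_sum_psd that by blast
qed

text \<open>With \<open>H = S - T\<close> we have \<open>S H + H T = S\<^sup>2 - T\<^sup>2 = 0\<close>.  Testing against a unit eigenvector
  \<open>x\<close> of \<open>H\<close> with eigenvalue \<open>\<lambda>\<close> gives \<open>\<lambda> (\<langle>x, S x\<rangle> + \<langle>x, T x\<rangle>) = 0\<close>; if \<open>\<lambda> \<noteq> 0\<close> both terms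
  vanish, so \<open>S x = T x = 0\<close> and \<open>\<lambda> x = H x = 0\<close>.  Hence \<open>H\<close> has only the eigenvalue \<open>0\<close>.\<close>

lemma psd_sqrt_diff_eigenvalue_zero:
  assumes PS: "psd_mat n S" and PT: "psd_mat n T" and eq: "S * S = T * T"
    and x: "x \<in> carrier_vec n" "cinner n x x = 1" and Hx: "(S - T) *\<^sub>v x = of_real l \<cdot>\<^sub>v x"
  shows "l = 0"
proof (rule ccontr)
  assume l: "l \<noteq> 0"
  have S: "S \<in> carrier_mat n n" and T: "T \<in> carrier_mat n n" using PS PT by (auto simp: psd_mat_carrier)
  have HH: "hermitian_mat n (S - T)" using PS PT by (intro hermitian_mat_diff psd_mat_hermitian)
  have Sx: "S *\<^sub>v x \<in> carrier_vec n" and Tx: "T *\<^sub>v x \<in> carrier_vec n" using S T x by auto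
  have HxST: "(S - T) *\<^sub>v x = S *\<^sub>v x - T *\<^sub>v x" by (rule minus_mult_distrib_mat_vec[OF S T x(1)])
  have SH: "S *\<^sub>v ((S - T) *\<^sub>v x) = S *\<^sub>v (S *\<^sub>v x) - S *\<^sub>v (T *\<^sub>v x)"
    unfolding HxST by (rule mult_minus_distrib_mat_vec[OF S Sx Tx])
  have HT: "(S - T) *\<^sub>v (T *\<^sub>v x) = S *\<^sub>v (T *\<^sub>v x) - T *\<^sub>v (T *\<^sub>v x)"
    by (rule minus_mult_distrib_mat_vec[OF S T Tx])
  have "S *\<^sub>v (S *\<^sub>v x) = T *\<^sub>v (T *\<^sub>v x)"
    using eq assoc_mult_mat_vec[OF S S x(1)] assoc_mult_mat_vec[OF T T x(1)] by simp
  then have "cinner n x (S *\<^sub>v ((S - T) *\<^sub>v x)) + cinner n x ((S - T) *\<^sub>v (T *\<^sub>v x)) = 0"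
    unfolding SH HT using S T Sx Tx by (simp add: cinner_diff_right)
  moreover have "cinner n x (S *\<^sub>v ((S - T) *\<^sub>v x)) = of_real l * cinner n x (S *\<^sub>v x)"
    unfolding Hx using mult_mat_vec[OF S x(1)] x S by (simp add: cinner_scale_right)
  moreover have "cinner n x ((S - T) *\<^sub>v (T *\<^sub>v x)) = of_real l * cinner n x (T *\<^sub>v x)"
    using hermitian_cinner[OF HH x(1) Tx] Hx x by (simp add: cinner_scale_left)
  ultimately have "cinner n x (S *\<^sub>v x) + cinner n x (T *\<^sub>v x) = 0"
    using l by (simp add: distrib_left[symmetric])
  then have "cinner n x (S *\<^sub>v x) = 0" "cinner n x (T *\<^sub>v x) = 0"
    using psd_quadratic_form_nonneg[OF PS x(1)] psd_quadratic_form_nonneg[OF PT x(1)]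
    by (simp_all add: add_nonneg_eq_0_iff)
  then have "(S - T) *\<^sub>v x = 0\<^sub>v n"
    unfolding HxST using psd_quadratic_form_zero[OF PS x(1)] psd_quadratic_form_zero[OF PT x(1)] by simp
  then have "cinner n x (of_real l \<cdot>\<^sub>v x) = 0" using Hx by (simp add: cinner_def)
  then have "of_real l * cinner n x x = 0" using x by (simp add: cinner_scale_right)
  then show False using x l by simp
qed

lemma psd_sqrt_unique:
  assumes PS: "psd_mat n S" and PT: "psd_mat n T" and eq: "S * S = T * T"
  shows "S = T"
proof -
  have S: "S \<in> carrier_mat n n" and T: "T \<in> carrier_mat n n" using PS PT by (auto simp: psd_mat_carrier)
  have H: "S - T \<in> carrier_mat n n" using T by (rule minus_carrier_mat)
  obtain u l where ob: "orthonormal_basis n u"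
    and ev: "\<And>k. k < n \<Longrightarrow> (S - T) *\<^sub>v u k = of_real (l k) \<cdot>\<^sub>v u k"
    using hermitian_eigenbasis[OF hermitian_mat_diff[OF psd_mat_hermitian[OF PS] psd_mat_hermitian[OF PT]]]
    by blast
  have "l k = 0" if "k < n" for k
    using psd_sqrt_diff_eigenvalue_zero[OF PS PT eq _ _ ev[OF that]] ob that
    by (auto simp: orthonormal_basis_cinner)
  then have "(S - T) $$ (i,j) = 0" if "i < n" "j < n" for i j
    using eigenbasis_expansion[OF H ob ev that] by simp
  then show ?thesis using S T by (intro eq_matI) auto
qed

lemma msqrt_eqI:
  assumes "psd_mat n S" "S * S = A"
  shows "msqrt n A = S"
  unfolding msqrt_def using assms psd_sqrt_unique by (intro the_equality) auto

lemma msqrt_psd_square: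
  assumes "psd_mat n A"
  shows "psd_mat n (msqrt n A)" "msqrt n A * msqrt n A = A"
  using psd_sqrt_exists[OF assms] msqrt_eqI by metis+

section \<open>The Hilbert--Schmidt inner product and Kronecker products\<close>

definition hs_inner :: "complex mat \<Rightarrow> complex mat \<Rightarrow> complex" where
  "hs_inner A B = (\<Sum>i<dim_row A. \<Sum>j<dim_col A. cnj (A $$ (i,j)) * B $$ (i,j))"

lemma hs_norm_sq_hs_inner: "hs_norm_sq X = Re (hs_inner X X)"
proof -
  have X: "X \<in> carrier_mat (dim_row X) (dim_col X)" and aX: "adj X \<in> carrier_mat (dim_col X) (dim_row X)"
    unfolding carrier_mat_def by simp_all
  have "mtrace (adj X * X) = (\<Sum>i<dim_col X. (adj X * X) $$ (i,i))"
    by (simp add: mtrace_def)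
  also have "\<dots> = (\<Sum>i<dim_col X. \<Sum>s<dim_row X. adj X $$ (i,s) * X $$ (s,i))"
  proof (rule sum.cong[OF refl])
    fix i assume "i \<in> {..<dim_col X}"
    then show "(adj X * X) $$ (i,i) = (\<Sum>s<dim_row X. adj X $$ (i,s) * X $$ (s,i))"
      by (intro index_mult_mat_sum[OF aX X]) auto
  qed
  also have "\<dots> = (\<Sum>i<dim_col X. \<Sum>s<dim_row X. cnj (X $$ (s,i)) * X $$ (s,i))"
    by (rule sum.cong[OF refl], rule sum.cong[OF refl]) (simp add: index_adj)
  also have "\<dots> = hs_inner X X" unfolding hs_inner_def by (rule sum.swap)
  finally show ?thesis by (simp add: hs_norm_sq_def)
qed

lemma hs_inner_self_sum:
  "hs_inner X X = of_real (\<Sum>i<dim_row X. \<Sum>j<dim_col X. (cmod (X $$ (i,j)))\<^sup>2)"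
  unfolding hs_inner_def of_real_sum
  by (intro sum.cong refl) (simp add: complex_norm_square mult.commute del: of_real_power)

lemma hs_inner_self: "hs_inner X X = of_real (hs_norm_sq X)"
  unfolding hs_norm_sq_hs_inner hs_inner_self_sum by (simp only: Re_complex_of_real)

lemma hs_norm_sq_nonneg: "hs_norm_sq X \<ge> 0"
  unfolding hs_norm_sq_hs_inner hs_inner_self_sum Re_complex_of_real by (intro sum_nonneg) simp

lemma hs_inner_commute:
  "dim_row A = dim_row B \<Longrightarrow> dim_col A = dim_col B \<Longrightarrow> hs_inner B A = cnj (hs_inner A B)"
  by (simp add: hs_inner_def mult.commute)

lemma hs_inner_diff_left:
  assumes "A \<in> carrier_mat n m" "B \<in> carrier_mat n m" "C \<in> carrier_mat n m"
  shows "hs_inner (A - B) C = hs_inner A C - hs_inner B C"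
  using assms by (simp add: hs_inner_def algebra_simps sum_subtractf)

lemma hs_inner_add_left:
  assumes "A \<in> carrier_mat n m" "B \<in> carrier_mat n m" "C \<in> carrier_mat n m"
  shows "hs_inner (A + B) C = hs_inner A C + hs_inner B C"
  using assms by (simp add: hs_inner_def algebra_simps sum.distrib)

lemma hs_inner_add_right:
  assumes "A \<in> carrier_mat n m" "B \<in> carrier_mat n m" "C \<in> carrier_mat n m"
  shows "hs_inner C (A + B) = hs_inner C A + hs_inner C B"
  using assms by (simp add: hs_inner_def algebra_simps sum.distrib)

lemma hs_norm_sq_add:
  assumes A: "A \<in> carrier_mat n m" and B: "B \<in> carrier_mat n m"
  shows "hs_norm_sq (A + B) = hs_norm_sq A + hs_norm_sq B + 2 * Re (hs_inner A B)"
proof -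
  have "hs_inner (A + B) (A + B) = hs_inner A A + hs_inner A B + (cnj (hs_inner A B) + hs_inner B B)"
    using A B by (simp add: hs_inner_add_left[OF A B] hs_inner_add_right hs_inner_commute[of A B])
  then show ?thesis by (simp add: hs_norm_sq_hs_inner)
qed

lemma hs_norm_sq_msqrt:
  assumes "psd_mat n A"
  shows "hs_norm_sq (msqrt n A) = Re (mtrace A)"
proof -
  have "adj (msqrt n A) = msqrt n A"
    using psd_mat_hermitian[OF msqrt_psd_square(1)[OF assms]] by (simp add: hermitian_mat_def)
  then show ?thesis by (simp add: hs_norm_sq_def msqrt_psd_square(2)[OF assms])
qed

lemma carrier_kron:
  "A \<in> carrier_mat n1 m1 \<Longrightarrow> B \<in> carrier_mat n2 m2 \<Longrightarrow> kron A B \<in> carrier_mat (n1 * n2) (m1 * m2)"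
  by (simp add: kron_def)

lemma index_kron:
  assumes "A \<in> carrier_mat n1 m1" "B \<in> carrier_mat n2 m2" "i1 < n1" "i2 < n2" "j1 < m1" "j2 < m2"
  shows "kron A B $$ (i1 * n2 + i2, j1 * m2 + j2) = A $$ (i1, j1) * B $$ (i2, j2)"
  using assms mult_add_less_mult[of i1 n1 i2 n2] mult_add_less_mult[of j1 m1 j2 m2]
  by (simp add: kron_def)

lemma hs_inner_kron:
  assumes A: "A \<in> carrier_mat n1 m1" and B: "B \<in> carrier_mat n2 m2"
    and C: "C \<in> carrier_mat n1 m1" and D: "D \<in> carrier_mat n2 m2"
  shows "hs_inner (kron A B) (kron C D) = hs_inner A C * hs_inner B D"
proof -
  have "hs_inner (kron A B) (kron C D)
      = (\<Sum>i<n1 * n2. \<Sum>j<m1 * m2. cnj (kron A B $$ (i,j)) * kron C D $$ (i,j))"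
    using A B by (simp add: hs_inner_def kron_def)
  also have "\<dots> = (\<Sum>i1<n1. \<Sum>i2<n2. \<Sum>j1<m1. \<Sum>j2<m2.
      cnj (kron A B $$ (i1 * n2 + i2, j1 * m2 + j2)) * kron C D $$ (i1 * n2 + i2, j1 * m2 + j2))"
    by (simp only: sum_lessThan_mult)
  also have "\<dots> = (\<Sum>i1<n1. \<Sum>i2<n2. \<Sum>j1<m1. \<Sum>j2<m2.
      (cnj (A $$ (i1,j1)) * C $$ (i1,j1)) * (cnj (B $$ (i2,j2)) * D $$ (i2,j2)))"
    by (intro sum.cong refl) (simp add: index_kron[OF A B] index_kron[OF C D])
  also have "\<dots> = (\<Sum>i1<n1. \<Sum>j1<m1. cnj (A $$ (i1,j1)) * C $$ (i1,j1))
      * (\<Sum>i2<n2. \<Sum>j2<m2. cnj (B $$ (i2,j2)) * D $$ (i2,j2))"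
    by (simp only: sum_product)
  finally show ?thesis using A B by (simp add: hs_inner_def)
qed

lemma hs_norm_sq_kron:
  assumes "A \<in> carrier_mat n1 m1" "B \<in> carrier_mat n2 m2"
  shows "hs_norm_sq (kron A B) = hs_norm_sq A * hs_norm_sq B"
proof -
  have "of_real (hs_norm_sq (kron A B)) = (of_real (hs_norm_sq A * hs_norm_sq B) :: complex)"
    using hs_inner_kron[OF assms assms] by (simp add: hs_inner_self)
  then show ?thesis by (simp only: of_real_eq_iff)
qed

lemma kron_mult_kron:
  assumes A: "A \<in> carrier_mat n1 n1" and B: "B \<in> carrier_mat n2 n2"
    and C: "C \<in> carrier_mat n1 n1" and D: "D \<in> carrier_mat n2 n2"
  shows "kron A B * kron C D = kron (A * C) (B * D)"
proof (rule eq_matI)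
  have KAB: "kron A B \<in> carrier_mat (n1 * n2) (n1 * n2)" using A B by (rule carrier_kron)
  have KCD: "kron C D \<in> carrier_mat (n1 * n2) (n1 * n2)" using C D by (rule carrier_kron)
  have AC: "A * C \<in> carrier_mat n1 n1" and BD: "B * D \<in> carrier_mat n2 n2" using A B C D by auto
  fix i j assume "i < dim_row (kron (A * C) (B * D))" "j < dim_col (kron (A * C) (B * D))"
  then have i: "i < n1 * n2" and j: "j < n1 * n2" using A B C D by (auto simp: kron_def)
  obtain i1 i2 where i12: "i1 < n1" "i2 < n2" "i = i1 * n2 + i2"
    using i by (rule mixed_radix_cases)
  obtain j1 j2 where j12: "j1 < n1" "j2 < n2" "j = j1 * n2 + j2"
    using j by (rule mixed_radix_cases)
  note ij = i12(1,2) j12(1,2) i12(3) j12(3)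
  have "(kron A B * kron C D) $$ (i,j) = (\<Sum>s<n1 * n2. kron A B $$ (i,s) * kron C D $$ (s,j))"
    by (rule index_mult_mat_sum[OF KAB KCD i j])
  also have "\<dots> = (\<Sum>s1<n1. \<Sum>s2<n2. kron A B $$ (i, s1 * n2 + s2) * kron C D $$ (s1 * n2 + s2, j))"
    by (rule sum_lessThan_mult)
  also have "\<dots> = (\<Sum>s1<n1. \<Sum>s2<n2. (A $$ (i1,s1) * C $$ (s1,j1)) * (B $$ (i2,s2) * D $$ (s2,j2)))"
    unfolding ij(5,6)
    by (intro sum.cong refl) (simp add: index_kron[OF A B] index_kron[OF C D] ij(1-4) mult_ac)
  also have "\<dots> = (A * C) $$ (i1,j1) * (B * D) $$ (i2,j2)"
    unfolding index_mult_mat_sum[OF A C ij(1,3)] index_mult_mat_sum[OF B D ij(2,4)]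
    by (simp only: sum_product)
  also have "\<dots> = kron (A * C) (B * D) $$ (i,j)"
    unfolding ij(5,6) by (rule index_kron[OF AC BD ij(1-4), symmetric])
  finally show "(kron A B * kron C D) $$ (i,j) = kron (A * C) (B * D) $$ (i,j)" .
qed (use A B C D in \<open>auto simp: kron_def\<close>)

lemma kron_diff_kron:
  fixes A A' B B' :: "complex mat"
  assumes A: "A \<in> carrier_mat n1 m1" and A': "A' \<in> carrier_mat n1 m1"
    and B: "B \<in> carrier_mat n2 m2" and B': "B' \<in> carrier_mat n2 m2"
  shows "kron A B - kron A' B' = kron A (B - B') + kron (A - A') B'"
proof (rule eq_matI)
  fix i j assume "i < dim_row (kron A (B - B') + kron (A - A') B')"
    "j < dim_col (kron A (B - B') + kron (A - A') B')"
  then have i: "i < n1 * n2" and j: "j < m1 * m2" using A B A' B' by (auto simp: kron_def)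
  moreover from i j have "n2 > 0" "m2 > 0" by (auto intro: gr0I)
  ultimately have "i div n2 < n1" "j div m2 < m1" "i mod n2 < n2" "j mod m2 < m2"
    by (auto simp: less_mult_imp_div_less)
  then show "(kron A B - kron A' B') $$ (i,j) = (kron A (B - B') + kron (A - A') B') $$ (i,j)"
    using A A' B B' i j by (simp add: kron_def algebra_simps)
qed (use A B in \<open>auto simp: kron_def\<close>)

lemma rank_one_sum_kron:
  assumes M1: "rank_one_sum n1 M1 K1 c1 w1" and M2: "rank_one_sum n2 M2 K2 c2 w2"
  shows "rank_one_sum (n1 * n2) (kron M1 M2) (K1 \<times> K2) (\<lambda>(k,l). c1 k * c2 l)
          (\<lambda>(k,l) i. w1 k (i div n2) * w2 l (i mod n2))"
proof -
  have C1: "M1 \<in> carrier_mat n1 n1" and C2: "M2 \<in> carrier_mat n2 n2"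
    using M1 M2 by (auto simp: rank_one_sum_def)
  have "kron M1 M2 $$ (i,j) = (\<Sum>(k,l)\<in>K1 \<times> K2. of_real (c1 k * c2 l)
           * (w1 k (i div n2) * w2 l (i mod n2)) * cnj (w1 k (j div n2) * w2 l (j mod n2)))"
    if i: "i < n1 * n2" and j: "j < n1 * n2" for i j
  proof -
    have n2: "n2 > 0" using i by (cases n2) auto
    have "i div n2 < n1" "j div n2 < n1" "i mod n2 < n2" "j mod n2 < n2"
      using i j n2 by (auto simp: less_mult_imp_div_less)
    then have "kron M1 M2 $$ (i,j)
      = (\<Sum>k\<in>K1. of_real (c1 k) * w1 k (i div n2) * cnj (w1 k (j div n2)))
      * (\<Sum>l\<in>K2. of_real (c2 l) * w2 l (i mod n2) * cnj (w2 l (j mod n2)))"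
      using M1 M2 C1 C2 i j by (simp add: kron_def rank_one_sum_def)
    then show ?thesis
      by (simp add: sum_product sum.cartesian_product mult_ac)
  qed
  then show ?thesis using M1 M2 C1 C2
    by (auto simp: rank_one_sum_def carrier_kron case_prod_beta')
qed

section \<open>Measurements on the middle tensor factor\<close>

definition tri_index :: "nat \<Rightarrow> nat \<Rightarrow> nat \<Rightarrow> nat \<Rightarrow> nat \<Rightarrow> nat" where
  "tri_index d d4 x p y = (x * d + p) * d4 + y"

lemma sum_tri_index:
  fixes d1 d d4 :: nat
  shows "(\<Sum>i<d1 * d * d4. f i) = (\<Sum>x<d1. \<Sum>p<d. \<Sum>y<d4. f (tri_index d d4 x p y))"
  unfolding tri_index_def by (simp add: sum_lessThan_mult)

lemma tri_index_less:
  "x < d1 \<Longrightarrow> p < d \<Longrightarrow> y < d4 \<Longrightarrow> tri_index d d4 x p y < d1 * d * d4"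
  unfolding tri_index_def by (intro mult_add_less_mult)

lemma tri_index_cases:
  assumes "i < d1 * d * d4"
  obtains x p y where "x < d1" "p < d" "y < d4" "i = tri_index d d4 x p y"
proof -
  obtain r y where "r < d1 * d" "y < d4" "i = r * d4 + y" using assms by (rule mixed_radix_cases)
  moreover obtain x p where "x < d1" "p < d" "r = x * d + p" using \<open>r < d1 * d\<close> by (rule mixed_radix_cases)
  ultimately show ?thesis using that by (simp add: tri_index_def)
qed

definition mid_proj :: "nat \<Rightarrow> nat \<Rightarrow> complex vec \<Rightarrow> complex mat" where
  "mid_proj d1 d4 v = kron (kron (1\<^sub>m d1) (proj v)) (1\<^sub>m d4)"

lemma carrier_mid_proj: "v \<in> carrier_vec d \<Longrightarrow> mid_proj d1 d4 v \<in> carrier_mat (d1 * d * d4) (d1 * d * d4)"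
  by (simp add: mid_proj_def kron_def proj_def)

lemma index_mid_proj:
  assumes v: "v \<in> carrier_vec d" and "x < d1" "p < d" "y < d4" "x' < d1" "p' < d" "y' < d4"
  shows "mid_proj d1 d4 v $$ (tri_index d d4 x p y, tri_index d d4 x' p' y')
       = (if x = x' \<and> y = y' then v $ p * cnj (v $ p') else 0)"
  using assms tri_index_less[of x d1 p d y d4] tri_index_less[of x' d1 p' d y' d4]
    mult_add_less_mult[of x d1 p d] mult_add_less_mult[of x' d1 p' d]
  by (simp add: mid_proj_def kron_def proj_def tri_index_def)

lemma sum_tri_index_delta:
  fixes d1 d d4 :: nat
  assumes x: "x < d1" and y: "y < d4"
  shows "(\<Sum>x1<d1. \<Sum>p<d. \<Sum>y1<d4. if x = x1 \<and> y = y1 then G x1 p y1 else 0) = (\<Sum>p<d. G x p y)"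
proof -
  have "(\<Sum>y1<d4. if x = x1 \<and> y = y1 then G x1 p y1 else 0) = (if x = x1 then G x1 p y else 0)" for x1 p
    using y by (cases "x = x1") (simp_all add: sum.delta)
  then have "(\<Sum>x1<d1. \<Sum>p<d. \<Sum>y1<d4. if x = x1 \<and> y = y1 then G x1 p y1 else 0)
      = (\<Sum>x1<d1. if x = x1 then (\<Sum>p<d. G x1 p y) else 0)"
    by (intro sum.cong refl) simp
  also have "\<dots> = (\<Sum>p<d. G x p y)" using x by (simp add: sum.delta)
  finally show ?thesis .
qed

lemma mid_proj_mult_index:
  assumes v: "v \<in> carrier_vec d" and X: "X \<in> carrier_mat (d1 * d * d4) m" and t: "t < m"
    and x: "x < d1" and p: "p < d" and y: "y < d4"
  shows "(mid_proj d1 d4 v * X) $$ (tri_index d d4 x p y, t)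
       = (\<Sum>p1<d. v $ p * cnj (v $ p1) * X $$ (tri_index d d4 x p1 y, t))"
proof -
  have K: "mid_proj d1 d4 v \<in> carrier_mat (d1 * d * d4) (d1 * d * d4)" by (rule carrier_mid_proj[OF v])
  have "(mid_proj d1 d4 v * X) $$ (tri_index d d4 x p y, t)
      = (\<Sum>x1<d1. \<Sum>p1<d. \<Sum>y1<d4. mid_proj d1 d4 v $$ (tri_index d d4 x p y, tri_index d d4 x1 p1 y1)
          * X $$ (tri_index d d4 x1 p1 y1, t))"
    unfolding index_mult_mat_sum[OF K X tri_index_less[OF x p y] t] by (rule sum_tri_index)
  also have "\<dots> = (\<Sum>x1<d1. \<Sum>p1<d. \<Sum>y1<d4.
      if x = x1 \<and> y = y1 then v $ p * cnj (v $ p1) * X $$ (tri_index d d4 x1 p1 y1, t) else 0)"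
    by (intro sum.cong refl) (simp add: index_mid_proj[OF v x p y])
  finally show ?thesis by (simp only: sum_tri_index_delta[OF x y])
qed

lemma mult_mid_proj_index:
  assumes v: "v \<in> carrier_vec d" and X: "X \<in> carrier_mat m (d1 * d * d4)" and s: "s < m"
    and x: "x < d1" and q: "q < d" and y: "y < d4"
  shows "(X * mid_proj d1 d4 v) $$ (s, tri_index d d4 x q y)
       = (\<Sum>q1<d. X $$ (s, tri_index d d4 x q1 y) * (v $ q1 * cnj (v $ q)))"
proof -
  have K: "mid_proj d1 d4 v \<in> carrier_mat (d1 * d * d4) (d1 * d * d4)" by (rule carrier_mid_proj[OF v])
  have "(X * mid_proj d1 d4 v) $$ (s, tri_index d d4 x q y)
      = (\<Sum>x1<d1. \<Sum>q1<d. \<Sum>y1<d4. X $$ (s, tri_index d d4 x1 q1 y1)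
          * mid_proj d1 d4 v $$ (tri_index d d4 x1 q1 y1, tri_index d d4 x q y))"
    unfolding index_mult_mat_sum[OF X K s tri_index_less[OF x q y]] by (rule sum_tri_index)
  also have "\<dots> = (\<Sum>x1<d1. \<Sum>q1<d. \<Sum>y1<d4.
      if x = x1 \<and> y = y1 then X $$ (s, tri_index d d4 x1 q1 y1) * (v $ q1 * cnj (v $ q)) else 0)"
    by (intro sum.cong refl) (auto simp: index_mid_proj[OF v _ _ _ x q y])
  finally show ?thesis by (simp only: sum_tri_index_delta[OF x y])
qed

text \<open>The block of \<open>X\<close> between \<open>e\<^sub>x \<otimes> _ \<otimes> e\<^sub>y\<close> and \<open>e\<^sub>x\<^sub>' \<otimes> _ \<otimes> e\<^sub>y\<^sub>'\<close>, an operator on the middle factor.\<close>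

definition mid_block :: "nat \<Rightarrow> nat \<Rightarrow> complex mat \<Rightarrow> nat \<Rightarrow> nat \<Rightarrow> nat \<Rightarrow> nat \<Rightarrow> nat \<Rightarrow> nat \<Rightarrow> complex" where
  "mid_block d d4 X x y x' y' p q = X $$ (tri_index d d4 x p y, tri_index d d4 x' q y')"

definition quad_form :: "nat \<Rightarrow> complex vec \<Rightarrow> (nat \<Rightarrow> nat \<Rightarrow> complex) \<Rightarrow> complex" where
  "quad_form d v Y = (\<Sum>p<d. \<Sum>q<d. cnj (v $ p) * Y p q * v $ q)"

lemma index_mid_proj_sandwich:
  assumes v: "v \<in> carrier_vec d" and X: "X \<in> carrier_mat (d1 * d * d4) (d1 * d * d4)"
    and x: "x < d1" and p: "p < d" and y: "y < d4" and x': "x' < d1" and q: "q < d" and y': "y' < d4"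
  shows "(mid_proj d1 d4 v * X * mid_proj d1 d4 v) $$ (tri_index d d4 x p y, tri_index d d4 x' q y')
       = v $ p * cnj (v $ q) * quad_form d v (mid_block d d4 X x y x' y')"
proof -
  have K: "mid_proj d1 d4 v \<in> carrier_mat (d1 * d * d4) (d1 * d * d4)" by (rule carrier_mid_proj[OF v])
  have KX: "mid_proj d1 d4 v * X \<in> carrier_mat (d1 * d * d4) (d1 * d * d4)" using K X by simp
  have "(mid_proj d1 d4 v * X * mid_proj d1 d4 v) $$ (tri_index d d4 x p y, tri_index d d4 x' q y')
      = (\<Sum>q1<d. (\<Sum>p1<d. v $ p * cnj (v $ p1) * X $$ (tri_index d d4 x p1 y, tri_index d d4 x' q1 y'))
          * (v $ q1 * cnj (v $ q)))"
    unfolding mult_mid_proj_index[OF v KX tri_index_less[OF x p y] x' q y']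
    by (intro sum.cong refl) (simp add: mid_proj_mult_index[OF v X tri_index_less[OF x' _ y'] x p y])
  also have "\<dots> = (\<Sum>q1<d. \<Sum>p1<d. v $ p * cnj (v $ q)
      * (cnj (v $ p1) * X $$ (tri_index d d4 x p1 y, tri_index d d4 x' q1 y') * v $ q1))"
    unfolding sum_distrib_right by (intro sum.cong refl) (simp add: ac_simps)
  also have "\<dots> = v $ p * cnj (v $ q) * quad_form d v (mid_block d d4 X x y x' y')"
    by (subst sum.swap) (simp add: quad_form_def mid_block_def sum_distrib_left)
  finally show ?thesis .
qed

lemma carrier_meas_mid: "meas_mid d1 d d4 P X \<in> carrier_mat (d1 * d * d4) (d1 * d * d4)"
  by (simp add: meas_mid_def Let_def)

lemma index_meas_mid:
  assumes ob: "orthonormal_basis d u" and P: "\<forall>k<d. P k = proj (u k)"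
    and X: "X \<in> carrier_mat (d1 * d * d4) (d1 * d * d4)"
    and x: "x < d1" and p: "p < d" and y: "y < d4" and x': "x' < d1" and q: "q < d" and y': "y' < d4"
  shows "meas_mid d1 d d4 P X $$ (tri_index d d4 x p y, tri_index d d4 x' q y')
       = (\<Sum>k<d. u k $ p * cnj (u k $ q) * quad_form d (u k) (mid_block d d4 X x y x' y'))"
proof -
  have u: "u k \<in> carrier_vec d" if "k < d" for k using ob that by (simp add: orthonormal_basis_def)
  have "meas_mid d1 d d4 P X $$ (tri_index d d4 x p y, tri_index d d4 x' q y')
     = (\<Sum>k<d. (mid_proj d1 d4 (u k) * X * mid_proj d1 d4 (u k)) $$ (tri_index d d4 x p y, tri_index d d4 x' q y'))"
    using tri_index_less[OF x p y] tri_index_less[OF x' q y'] P by (simp add: meas_mid_def Let_def mid_proj_def)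
  then show ?thesis by (simp add: index_mid_proj_sandwich[OF u X x p y x' q y'])
qed

lemma hs_inner_tri_blocks:
  fixes d1 d d4 :: nat
  assumes A: "A \<in> carrier_mat (d1 * d * d4) (d1 * d * d4)"
  shows "hs_inner A B = (\<Sum>x<d1. \<Sum>y<d4. \<Sum>x'<d1. \<Sum>y'<d4. \<Sum>p<d. \<Sum>q<d.
     cnj (mid_block d d4 A x y x' y' p q) * mid_block d d4 B x y x' y' p q)"
proof -
  define F where "F x y x' y' p q = cnj (mid_block d d4 A x y x' y' p q) * mid_block d d4 B x y x' y' p q"
    for x y x' y' p q
  have "hs_inner A B = (\<Sum>x<d1. \<Sum>p<d. \<Sum>y<d4. \<Sum>x'<d1. \<Sum>q<d. \<Sum>y'<d4. F x y x' y' p q)"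
    using A by (simp add: hs_inner_def mid_block_def F_def sum_tri_index)
  also have "\<dots> = (\<Sum>x<d1. \<Sum>y<d4. \<Sum>p<d. \<Sum>x'<d1. \<Sum>q<d. \<Sum>y'<d4. F x y x' y' p q)"
    by (rule sum.cong[OF refl], rule sum.swap)
  also have "\<dots> = (\<Sum>x<d1. \<Sum>y<d4. \<Sum>x'<d1. \<Sum>p<d. \<Sum>q<d. \<Sum>y'<d4. F x y x' y' p q)"
    by (rule sum.cong[OF refl], rule sum.cong[OF refl], rule sum.swap)
  also have "\<dots> = (\<Sum>x<d1. \<Sum>y<d4. \<Sum>x'<d1. \<Sum>y'<d4. \<Sum>p<d. \<Sum>q<d. F x y x' y' p q)"
    by (rule sum.cong[OF refl], rule sum.cong[OF refl], rule sum.cong[OF refl], rule sum_swap_inner[symmetric])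
  finally show ?thesis unfolding F_def .
qed

lemma quad_form_cong:
  "(\<And>p q. p < d \<Longrightarrow> q < d \<Longrightarrow> Y p q = Z p q) \<Longrightarrow> quad_form d v Y = quad_form d v Z"
  unfolding quad_form_def by (intro sum.cong refl) auto

lemma hs_pairing_rank_one_sum:
  "(\<Sum>p<d. \<Sum>q<d. cnj (\<Sum>k<d. u k $ p * cnj (u k $ q) * a k) * Y p q)
   = (\<Sum>k<d. cnj (a k) * quad_form d (u k) Y)"
proof -
  have "(\<Sum>p<d. \<Sum>q<d. cnj (\<Sum>k<d. u k $ p * cnj (u k $ q) * a k) * Y p q)
      = (\<Sum>p<d. \<Sum>q<d. \<Sum>k<d. cnj (a k) * (cnj (u k $ p) * Y p q * u k $ q))"
    by (intro sum.cong refl) (simp add: sum_distrib_left sum_distrib_right ac_simps)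
  also have "\<dots> = (\<Sum>k<d. cnj (a k) * quad_form d (u k) Y)"
    by (subst sum_swap_inner[symmetric]) (simp add: quad_form_def sum_distrib_left)
  finally show ?thesis .
qed

lemma quad_form_rank_one_sum:
  assumes ob: "orthonormal_basis d u" and k: "k < d"
  shows "quad_form d (u k) (\<lambda>p q. \<Sum>l<d. u l $ p * cnj (u l $ q) * a l) = a k"
proof -
  have "quad_form d (u k) (\<lambda>p q. \<Sum>l<d. u l $ p * cnj (u l $ q) * a l)
      = (\<Sum>p<d. \<Sum>q<d. \<Sum>l<d. a l * ((cnj (u k $ p) * u l $ p) * (cnj (u l $ q) * u k $ q)))"
    unfolding quad_form_def
    by (intro sum.cong refl) (simp add: sum_distrib_left sum_distrib_right ac_simps)
  also have "\<dots> = (\<Sum>l<d. \<Sum>p<d. \<Sum>q<d. a l * ((cnj (u k $ p) * u l $ p) * (cnj (u l $ q) * u k $ q)))"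
    by (rule sum_swap_inner[symmetric])
  also have "\<dots> = (\<Sum>l<d. a l * ((\<Sum>p<d. cnj (u k $ p) * u l $ p) * (\<Sum>q<d. cnj (u l $ q) * u k $ q)))"
    by (intro sum.cong refl) (simp only: sum_product, simp only: sum_distrib_left)
  also have "\<dots> = (\<Sum>l<d. if l = k then a k else 0)"
    using ob k by (intro sum.cong refl) (auto simp: orthonormal_basis_def)
  finally show ?thesis using k by simp
qed

text \<open>The pinching \<open>X \<mapsto> \<Sum>\<^sub>k \<Pi>\<^sub>k X \<Pi>\<^sub>k\<close> is the orthogonal projection, for the Hilbert--Schmidt inner
  product, onto the operators block-diagonal for the measurement.\<close>

lemma hs_inner_meas_mid_self:
  assumes ob: "orthonormal_basis d u" and P: "\<forall>k<d. P k = proj (u k)"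
    and X: "X \<in> carrier_mat (d1 * d * d4) (d1 * d * d4)"
  shows "hs_inner (meas_mid d1 d d4 P X) X = hs_inner (meas_mid d1 d d4 P X) (meas_mid d1 d d4 P X)"
proof -
  let ?M = "meas_mid d1 d d4 P X"
  let ?c = "\<lambda>k x y x' y'. quad_form d (u k) (mid_block d d4 X x y x' y')"
  have M: "?M \<in> carrier_mat (d1 * d * d4) (d1 * d * d4)" by (rule carrier_meas_mid)
  have block: "mid_block d d4 ?M x y x' y' p q = (\<Sum>k<d. u k $ p * cnj (u k $ q) * ?c k x y x' y')"
    if "x < d1" "y < d4" "x' < d1" "y' < d4" "p < d" "q < d" for x y x' y' p q
    using that by (simp add: mid_block_def index_meas_mid[OF ob P X])
  have pair: "(\<Sum>p<d. \<Sum>q<d. cnj (mid_block d d4 ?M x y x' y' p q) * mid_block d d4 B x y x' y' p q)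
      = (\<Sum>k<d. cnj (?c k x y x' y') * quad_form d (u k) (mid_block d d4 B x y x' y'))"
    if "x < d1" "y < d4" "x' < d1" "y' < d4" for x y x' y' B
  proof -
    have "(\<Sum>p<d. \<Sum>q<d. cnj (mid_block d d4 ?M x y x' y' p q) * mid_block d d4 B x y x' y' p q)
      = (\<Sum>p<d. \<Sum>q<d. cnj (\<Sum>k<d. u k $ p * cnj (u k $ q) * ?c k x y x' y')
          * mid_block d d4 B x y x' y' p q)"
      using that by (intro sum.cong refl) (simp add: block)
    then show ?thesis by (simp only: hs_pairing_rank_one_sum)
  qed
  have "quad_form d (u k) (mid_block d d4 ?M x y x' y') = ?c k x y x' y'"
    if "x < d1" "y < d4" "x' < d1" "y' < d4" "k < d" for x y x' y' k
  proof -
    have "quad_form d (u k) (mid_block d d4 ?M x y x' y')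
        = quad_form d (u k) (\<lambda>p q. \<Sum>l<d. u l $ p * cnj (u l $ q) * ?c l x y x' y')"
      using that by (intro quad_form_cong) (simp add: block)
    then show ?thesis using quad_form_rank_one_sum[OF ob \<open>k < d\<close>] by simp
  qed
  then show ?thesis
    unfolding hs_inner_tri_blocks[OF M, of ?M] hs_inner_tri_blocks[OF M, of X] by (simp add: pair)
qed

lemma hs_inner_diff_meas_mid:
  assumes vN: "vN_measurement d P" and X: "X \<in> carrier_mat (d1 * d * d4) (d1 * d * d4)"
  shows "hs_inner (X - meas_mid d1 d d4 P X) (meas_mid d1 d d4 P X) = 0"
proof -
  obtain u where ob: "orthonormal_basis d u" and P: "\<forall>k<d. P k = proj (u k)"
    using vN unfolding vN_measurement_def by blast
  let ?M = "meas_mid d1 d d4 P X"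
  have M: "?M \<in> carrier_mat (d1 * d * d4) (d1 * d * d4)" by (rule carrier_meas_mid)
  have "hs_inner (X - ?M) ?M = cnj (hs_inner ?M X) - hs_inner ?M ?M"
    using X M by (simp add: hs_inner_diff_left[OF X M M] hs_inner_commute[of ?M X])
  also have "\<dots> = 0" unfolding hs_inner_meas_mid_self[OF ob P X] hs_inner_self by simp
  finally show ?thesis .
qed

lemma hs_norm_sq_diff_meas_mid_le:
  assumes vN: "vN_measurement d P" and X: "X \<in> carrier_mat (d1 * d * d4) (d1 * d * d4)"
  shows "hs_norm_sq (X - meas_mid d1 d d4 P X) \<le> hs_norm_sq X"
proof -
  let ?M = "meas_mid d1 d d4 P X"
  have M: "?M \<in> carrier_mat (d1 * d * d4) (d1 * d * d4)" by (rule carrier_meas_mid)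
  have XM: "X - ?M \<in> carrier_mat (d1 * d * d4) (d1 * d * d4)" using M by (rule minus_carrier_mat)
  have "(X - ?M) + ?M = X" using X M by (intro eq_matI) auto
  then have "hs_norm_sq X = hs_norm_sq (X - ?M) + hs_norm_sq ?M + 2 * Re (hs_inner (X - ?M) ?M)"
    using hs_norm_sq_add[OF XM M] by simp
  then have "hs_norm_sq X = hs_norm_sq (X - ?M) + hs_norm_sq ?M"
    using hs_inner_diff_meas_mid[OF vN X] by simp
  then show ?thesis using hs_norm_sq_nonneg[of ?M] by simp
qed

lemma quad_form_eq_cinner:
  assumes "A \<in> carrier_mat d d" "v \<in> carrier_vec d"
  shows "quad_form d v (\<lambda>p q. A $$ (p,q)) = cinner d v (A *\<^sub>v v)"
  using assms by (simp add: quad_form_def cinner_def index_mult_mat_vec_sum sum_distrib_left mult.assoc)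

lemma meas_mid_eigenbasis_fixes:
  assumes A: "A \<in> carrier_mat d d" and ob: "orthonormal_basis d u"
    and ev: "\<And>k. k < d \<Longrightarrow> A *\<^sub>v u k = of_real (l k) \<cdot>\<^sub>v u k"
  shows "meas_mid 1 d 1 (\<lambda>k. proj (u k)) A = A"
proof (rule eq_matI)
  have u: "u k \<in> carrier_vec d" and uu: "cinner d (u k) (u k) = 1" if "k < d" for k
    using ob that by (auto simp: orthonormal_basis_cinner)
  have A1: "A \<in> carrier_mat (1 * d * 1) (1 * d * 1)" using A by simp
  have block: "mid_block d 1 A 0 0 0 0 = (\<lambda>p q. A $$ (p,q))"
    by (intro ext) (simp add: mid_block_def tri_index_def)
  fix p q assume "p < dim_row A" "q < dim_col A"
  then have p: "p < d" and q: "q < d" using A by auto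
  have "meas_mid 1 d 1 (\<lambda>k. proj (u k)) A $$ (tri_index d 1 0 p 0, tri_index d 1 0 q 0)
      = (\<Sum>k<d. u k $ p * cnj (u k $ q) * quad_form d (u k) (mid_block d 1 A 0 0 0 0))"
    by (rule index_meas_mid[OF ob _ A1]) (use p q in auto)
  then have "meas_mid 1 d 1 (\<lambda>k. proj (u k)) A $$ (p,q)
      = (\<Sum>k<d. u k $ p * cnj (u k $ q) * quad_form d (u k) (\<lambda>p q. A $$ (p,q)))"
    unfolding block by (simp add: tri_index_def)
  also have "\<dots> = (\<Sum>k<d. of_real (l k) * u k $ p * cnj (u k $ q))"
    using u uu ev by (intro sum.cong refl) (simp add: quad_form_eq_cinner[OF A] cinner_scale_right)
  also have "\<dots> = A $$ (p,q)" by (rule eigenbasis_expansion[OF A ob ev p q, symmetric])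
  finally show "meas_mid 1 d 1 (\<lambda>k. proj (u k)) A $$ (p,q) = A $$ (p,q)" .
qed (use A in \<open>auto simp: meas_mid_def Let_def\<close>)

lemma exists_vN_measurement_fixing:
  assumes "hermitian_mat d A"
  obtains P where "vN_measurement d P" "meas_mid 1 d 1 P A = A"
proof -
  obtain u and l :: "nat \<Rightarrow> real" where ob: "orthonormal_basis d u"
    and ev: "\<And>k. k < d \<Longrightarrow> A *\<^sub>v u k = of_real (l k) \<cdot>\<^sub>v u k"
    using hermitian_eigenbasis[OF assms] by blast
  have "vN_measurement d (\<lambda>k. proj (u k))" unfolding vN_measurement_def using ob by blast
  then show ?thesis
    using that meas_mid_eigenbasis_fixes[OF hermitian_mat_carrier[OF assms] ob ev] by blast
qed

section \<open>Reordering tensor factors and product measurements\<close>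

definition swap_index :: "nat \<Rightarrow> nat \<Rightarrow> nat \<Rightarrow> nat" where
  "swap_index a b i = (i mod a) * b + i div a"

lemma swap_index_less:
  fixes a b i :: nat
  assumes "i < b * a"
  shows "swap_index a b i < a * b"
proof -
  have a: "a > 0" using assms by (cases a) auto
  then show ?thesis
    unfolding swap_index_def using assms by (intro mult_add_less_mult) (auto simp: less_mult_imp_div_less)
qed

lemma swap_index_mult_add:
  fixes a b x y :: nat
  assumes "y < a"
  shows "swap_index a b (x * a + y) = y * b + x"
  using assms by (simp add: swap_index_def)

lemma carrier_swap_mat: "swap_mat a b R \<in> carrier_mat (b * a) (b * a)"
  by (simp add: swap_mat_def)

lemma index_swap_mat:
  "i < b * a \<Longrightarrow> j < b * a \<Longrightarrow> swap_mat a b R $$ (i,j) = R $$ (swap_index a b i, swap_index a b j)"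
  by (simp add: swap_mat_def swap_index_def)

lemma sum_swap_index:
  fixes a b :: nat
  shows "(\<Sum>i<b * a. g (swap_index a b i)) = (\<Sum>i<a * b. g i)"
proof -
  have "(\<Sum>i<b * a. g (swap_index a b i)) = (\<Sum>x<b. \<Sum>y<a. g (y * b + x))"
    by (simp add: sum_lessThan_mult swap_index_mult_add)
  also have "\<dots> = (\<Sum>i<a * b. g i)" by (subst sum.swap) (simp add: sum_lessThan_mult)
  finally show ?thesis .
qed

lemma swap_mat_mult:
  assumes R: "R \<in> carrier_mat (a * b) (a * b)" and R': "R' \<in> carrier_mat (a * b) (a * b)"
  shows "swap_mat a b R * swap_mat a b R' = swap_mat a b (R * R')"
proof (rule eq_matI)
  fix i j assume "i < dim_row (swap_mat a b (R * R'))" "j < dim_col (swap_mat a b (R * R'))"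
  then have i: "i < b * a" and j: "j < b * a" by (auto simp: swap_mat_def)
  have "(swap_mat a b R * swap_mat a b R') $$ (i,j)
      = (\<Sum>s<b * a. R $$ (swap_index a b i, swap_index a b s) * R' $$ (swap_index a b s, swap_index a b j))"
    by (simp add: index_mult_mat_sum[OF carrier_swap_mat carrier_swap_mat i j] index_swap_mat i j)
  also have "\<dots> = (\<Sum>s<a * b. R $$ (swap_index a b i, s) * R' $$ (s, swap_index a b j))"
    by (rule sum_swap_index)
  also have "\<dots> = swap_mat a b (R * R') $$ (i,j)"
    by (simp add: index_mult_mat_sum[OF R R' swap_index_less[OF i] swap_index_less[OF j]] index_swap_mat i j)
  finally show "(swap_mat a b R * swap_mat a b R') $$ (i,j) = swap_mat a b (R * R') $$ (i,j)" .
qed (auto simp: swap_mat_def)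

lemma rank_one_sum_swap_mat:
  assumes "rank_one_sum (a * b) R K c w"
  shows "rank_one_sum (b * a) (swap_mat a b R) K c (\<lambda>k i. w k (swap_index a b i))"
  using assms swap_index_less carrier_swap_mat by (simp add: rank_one_sum_def index_swap_mat)

lemma hs_norm_sq_swap_mat:
  assumes R: "R \<in> carrier_mat (a * b) (a * b)"
  shows "hs_norm_sq (swap_mat a b R) = hs_norm_sq R"
proof -
  have "hs_inner (swap_mat a b R) (swap_mat a b R)
      = (\<Sum>i<b * a. \<Sum>j<b * a. cnj (R $$ (swap_index a b i, swap_index a b j)) * R $$ (swap_index a b i, swap_index a b j))"
    unfolding hs_inner_def by (simp add: swap_mat_def swap_index_def)
  also have "\<dots> = (\<Sum>i<b * a. \<Sum>j<a * b. cnj (R $$ (swap_index a b i, j)) * R $$ (swap_index a b i, j))"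
    by (rule sum.cong[OF refl], rule sum_swap_index)
  also have "\<dots> = (\<Sum>i<a * b. \<Sum>j<a * b. cnj (R $$ (i, j)) * R $$ (i, j))"
    by (rule sum_swap_index)
  also have "\<dots> = hs_inner R R" using R by (simp add: hs_inner_def)
  finally show ?thesis by (simp add: hs_norm_sq_hs_inner)
qed

text \<open>The product basis \<open>u\<^sub>k \<otimes> u\<^sub>l\<close> of \<open>\<complex>\<^sup>a \<otimes> \<complex>\<^sup>a\<close>, indexed by \<open>k * a + l\<close>.\<close>

definition prod_basis :: "nat \<Rightarrow> (nat \<Rightarrow> complex vec) \<Rightarrow> nat \<Rightarrow> complex vec" where
  "prod_basis a u m = vec (a * a) (\<lambda>i. u (m div a) $ (i div a) * u (m mod a) $ (i mod a))"

lemma index_prod_basis: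
  fixes a :: nat
  assumes "k < a" "l < a" "p < a" "q < a"
  shows "prod_basis a u (k * a + l) $ (p * a + q) = u k $ p * u l $ q"
  using assms mult_add_less_mult[of p a q a] by (simp add: prod_basis_def)

lemma orthonormal_basis_prod_basis:
  assumes ob: "orthonormal_basis a u"
  shows "orthonormal_basis (a * a) (prod_basis a u)"
  unfolding orthonormal_basis_def
proof (intro conjI allI impI)
  fix k assume "k < a * a" then show "prod_basis a u k \<in> carrier_vec (a * a)" by (simp add: prod_basis_def)
next
  fix m m' assume m: "m < a * a" and m': "m' < a * a"
  obtain k l where kl: "k < a" "l < a" "m = k * a + l" using m by (rule mixed_radix_cases)
  obtain k' l' where kl': "k' < a" "l' < a" "m' = k' * a + l'" using m' by (rule mixed_radix_cases)
  have "(\<Sum>i<a * a. cnj (prod_basis a u m $ i) * prod_basis a u m' $ i)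
      = (\<Sum>p<a. \<Sum>q<a. (cnj (u k $ p) * u k' $ p) * (cnj (u l $ q) * u l' $ q))"
    unfolding sum_lessThan_mult kl(3) kl'(3) by (intro sum.cong refl) (simp add: index_prod_basis kl kl')
  also have "\<dots> = (\<Sum>p<a. cnj (u k $ p) * u k' $ p) * (\<Sum>q<a. cnj (u l $ q) * u l' $ q)"
    by (simp only: sum_product)
  moreover have "m div a = k" "m mod a = l" "m' div a = k'" "m' mod a = l'"
    using kl kl' by simp_all
  then have "m = m' \<longleftrightarrow> k = k' \<and> l = l'" using kl(3) kl'(3) by metis
  ultimately show "(\<Sum>i<a * a. cnj (prod_basis a u m $ i) * prod_basis a u m' $ i) = (if m = m' then 1 else 0)"
    using ob kl kl' by (auto simp: orthonormal_basis_def)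
qed

lemma tri_index_mult_add:
  fixes a d4 x p1 p2 y :: nat
  shows "tri_index (a * a) d4 x (p1 * a + p2) y = (x * a + p1) * (a * d4) + (p2 * d4 + y)"
  unfolding tri_index_def by (simp add: algebra_simps)

lemma quad_form_prod_basis_kron:
  fixes a d1 d4 :: nat
  assumes X: "X \<in> carrier_mat (d1 * a) (d1 * a)" and Y: "Y \<in> carrier_mat (a * d4) (a * d4)"
    and k: "k < a" and l: "l < a"
    and x: "x < d1" and y: "y < d4" and x': "x' < d1" and y': "y' < d4"
  shows "quad_form (a * a) (prod_basis a u (k * a + l)) (mid_block (a * a) d4 (kron X Y) x y x' y')
       = quad_form a (u k) (mid_block a 1 X x 0 x' 0) * quad_form a (u l) (mid_block a d4 Y 0 y 0 y')"
proof -
  have block: "mid_block (a * a) d4 (kron X Y) x y x' y' (p1 * a + p2) (q1 * a + q2)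
      = mid_block a 1 X x 0 x' 0 p1 q1 * mid_block a d4 Y 0 y 0 y' p2 q2"
    if "p1 < a" "p2 < a" "q1 < a" "q2 < a" for p1 p2 q1 q2
    unfolding mid_block_def tri_index_mult_add
    using index_kron[OF X Y] mult_add_less_mult that x y x' y' by (simp add: tri_index_def)
  have "quad_form (a * a) (prod_basis a u (k * a + l)) (mid_block (a * a) d4 (kron X Y) x y x' y')
      = (\<Sum>p1<a. \<Sum>p2<a. \<Sum>q1<a. \<Sum>q2<a.
          (cnj (u k $ p1) * mid_block a 1 X x 0 x' 0 p1 q1 * u k $ q1)
        * (cnj (u l $ p2) * mid_block a d4 Y 0 y 0 y' p2 q2 * u l $ q2))"
    unfolding quad_form_def sum_lessThan_mult
    by (intro sum.cong refl) (simp add: block index_prod_basis k l; simp add: mult_ac)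
  also have "\<dots> = quad_form a (u k) (mid_block a 1 X x 0 x' 0) * quad_form a (u l) (mid_block a d4 Y 0 y 0 y')"
    unfolding quad_form_def by (simp only: sum_product)
  finally show ?thesis .
qed

lemma index_meas_mid_kron:
  fixes a d1 d4 :: nat
  assumes ob: "orthonormal_basis a u" and P: "\<forall>k<a. P k = proj (u k)"
    and X: "X \<in> carrier_mat (d1 * a) (d1 * a)" and Y: "Y \<in> carrier_mat (a * d4) (a * d4)"
    and x: "x < d1" and a1: "a1 < a" and a2: "a2 < a" and y: "y < d4"
    and x': "x' < d1" and b1: "b1 < a" and b2: "b2 < a" and y': "y' < d4"
  shows "meas_mid d1 (a * a) d4 (\<lambda>m. proj (prod_basis a u m)) (kron X Y)
      $$ (tri_index (a * a) d4 x (a1 * a + a2) y, tri_index (a * a) d4 x' (b1 * a + b2) y')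
    = meas_mid d1 a 1 P X $$ (x * a + a1, x' * a + b1) * meas_mid 1 a d4 P Y $$ (a2 * d4 + y, b2 * d4 + y')"
proof -
  have KXY: "kron X Y \<in> carrier_mat (d1 * (a * a) * d4) (d1 * (a * a) * d4)"
    using carrier_kron[OF X Y] by (simp add: ac_simps)
  have X1: "X \<in> carrier_mat (d1 * a * 1) (d1 * a * 1)" and Y1: "Y \<in> carrier_mat (1 * a * d4) (1 * a * d4)"
    using X Y by auto
  have eX: "meas_mid d1 a 1 P X $$ (tri_index a 1 x a1 0, tri_index a 1 x' b1 0)
      = (\<Sum>k<a. u k $ a1 * cnj (u k $ b1) * quad_form a (u k) (mid_block a 1 X x 0 x' 0))"
    by (rule index_meas_mid[OF ob P X1]) (use x a1 x' b1 in auto)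
  have eY: "meas_mid 1 a d4 P Y $$ (tri_index a d4 0 a2 y, tri_index a d4 0 b2 y')
      = (\<Sum>l<a. u l $ a2 * cnj (u l $ b2) * quad_form a (u l) (mid_block a d4 Y 0 y 0 y'))"
    by (rule index_meas_mid[OF ob P Y1]) (use a2 y b2 y' in auto)
  have "meas_mid d1 (a * a) d4 (\<lambda>m. proj (prod_basis a u m)) (kron X Y)
      $$ (tri_index (a * a) d4 x (a1 * a + a2) y, tri_index (a * a) d4 x' (b1 * a + b2) y')
    = (\<Sum>m<a * a. prod_basis a u m $ (a1 * a + a2) * cnj (prod_basis a u m $ (b1 * a + b2))
        * quad_form (a * a) (prod_basis a u m) (mid_block (a * a) d4 (kron X Y) x y x' y'))"
    by (rule index_meas_mid[OF orthonormal_basis_prod_basis[OF ob] _ KXY])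
      (use x y x' y' a1 a2 b1 b2 mult_add_less_mult in auto)
  also have "\<dots> = (\<Sum>k<a. \<Sum>l<a. (u k $ a1 * cnj (u k $ b1) * quad_form a (u k) (mid_block a 1 X x 0 x' 0))
       * (u l $ a2 * cnj (u l $ b2) * quad_form a (u l) (mid_block a d4 Y 0 y 0 y')))"
    unfolding sum_lessThan_mult
    by (intro sum.cong refl)
      (simp add: index_prod_basis a1 a2 b1 b2 quad_form_prod_basis_kron[OF X Y _ _ x y x' y']; simp add: mult_ac)
  also have "\<dots> = meas_mid d1 a 1 P X $$ (tri_index a 1 x a1 0, tri_index a 1 x' b1 0)
      * meas_mid 1 a d4 P Y $$ (tri_index a d4 0 a2 y, tri_index a d4 0 b2 y')"
    unfolding eX eY by (simp only: sum_product)
  finally show ?thesis by (simp add: tri_index_def)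
qed

lemma meas_mid_kron:
  fixes a d1 d4 :: nat
  assumes ob: "orthonormal_basis a u" and P: "\<forall>k<a. P k = proj (u k)"
    and X: "X \<in> carrier_mat (d1 * a) (d1 * a)" and Y: "Y \<in> carrier_mat (a * d4) (a * d4)"
  shows "meas_mid d1 (a * a) d4 (\<lambda>m. proj (prod_basis a u m)) (kron X Y)
       = kron (meas_mid d1 a 1 P X) (meas_mid 1 a d4 P Y)"
proof (rule eq_matI)
  have A: "meas_mid d1 a 1 P X \<in> carrier_mat (d1 * a) (d1 * a)"
    using carrier_meas_mid[of d1 a 1 P X] by simp
  have B: "meas_mid 1 a d4 P Y \<in> carrier_mat (a * d4) (a * d4)"
    using carrier_meas_mid[of 1 a d4 P Y] by simp
  fix i j
  assume "i < dim_row (kron (meas_mid d1 a 1 P X) (meas_mid 1 a d4 P Y))"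
    and "j < dim_col (kron (meas_mid d1 a 1 P X) (meas_mid 1 a d4 P Y))"
  then have "i < d1 * (a * a) * d4" "j < d1 * (a * a) * d4"
    using carrier_kron[OF A B] by (auto simp: ac_simps)
  then obtain x m y x' m' y' where i: "x < d1" "m < a * a" "y < d4" "i = tri_index (a * a) d4 x m y"
    and j: "x' < d1" "m' < a * a" "y' < d4" "j = tri_index (a * a) d4 x' m' y'"
    by (metis tri_index_cases)
  obtain a1 a2 where m: "a1 < a" "a2 < a" "m = a1 * a + a2" using i(2) by (rule mixed_radix_cases)
  obtain b1 b2 where m': "b1 < a" "b2 < a" "m' = b1 * a + b2" using j(2) by (rule mixed_radix_cases)
  show "meas_mid d1 (a * a) d4 (\<lambda>m. proj (prod_basis a u m)) (kron X Y) $$ (i,j)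
      = kron (meas_mid d1 a 1 P X) (meas_mid 1 a d4 P Y) $$ (i,j)"
  proof -
    have "meas_mid d1 (a * a) d4 (\<lambda>m. proj (prod_basis a u m)) (kron X Y) $$ (i,j)
      = meas_mid d1 a 1 P X $$ (x * a + a1, x' * a + b1) * meas_mid 1 a d4 P Y $$ (a2 * d4 + y, b2 * d4 + y')"
      unfolding i(4) j(4) m(3) m'(3)
      by (rule index_meas_mid_kron[OF ob P X Y i(1) m(1,2) i(3) j(1) m'(1,2) j(3)])
    also have "\<dots> = kron (meas_mid d1 a 1 P X) (meas_mid 1 a d4 P Y) $$ (i,j)"
      unfolding i(4) j(4) m(3) m'(3) tri_index_mult_add
      using i j m m' by (intro index_kron[OF A B, symmetric] mult_add_less_mult)
    finally show ?thesis .
  qed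
qed (auto simp: meas_mid_def Let_def kron_def ac_simps)

lemma reduce_mid_kron_swap:
  fixes a b :: nat
  assumes R: "\<rho> \<in> carrier_mat (a * b) (a * b)"
  shows "reduce_mid b (a * a) b (kron (swap_mat a b \<rho>) \<rho>) = kron (reduce_mid 1 a b \<rho>) (reduce_mid 1 a b \<rho>)"
proof (rule eq_matI)
  let ?A = "reduce_mid 1 a b \<rho>"
  have A: "?A \<in> carrier_mat a a" by (simp add: reduce_mid_def)
  have S: "swap_mat a b \<rho> \<in> carrier_mat (b * a) (b * a)" by (rule carrier_swap_mat)
  fix i j assume "i < dim_row (kron ?A ?A)" "j < dim_col (kron ?A ?A)"
  then have "i < a * a" "j < a * a" using A by (auto simp: kron_def)
  then obtain a1 a2 b1 b2 where i: "a1 < a" "a2 < a" "i = a1 * a + a2"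
    and j: "b1 < a" "b2 < a" "j = b1 * a + b2"
    by (metis mixed_radix_cases)
  have "reduce_mid b (a * a) b (kron (swap_mat a b \<rho>) \<rho>) $$ (i,j)
      = (\<Sum>c<b. \<Sum>c'<b. kron (swap_mat a b \<rho>) \<rho> $$ ((c * a + a1) * (a * b) + (a2 * b + c'),
                                                   (c * a + b1) * (a * b) + (b2 * b + c')))"
    using i j mult_add_less_mult[of a1 a a2 a] mult_add_less_mult[of b1 a b2 a]
    by (simp add: reduce_mid_def algebra_simps)
  also have "\<dots> = (\<Sum>c<b. \<Sum>c'<b. \<rho> $$ (a1 * b + c, b1 * b + c) * \<rho> $$ (a2 * b + c', b2 * b + c'))"
    using i j mult_add_less_mult[of _ b _ a] mult_add_less_mult[of _ a _ b]
    by (intro sum.cong refl) (simp add: index_kron[OF S R] index_swap_mat swap_index_mult_add)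
  also have "\<dots> = ?A $$ (a1,b1) * ?A $$ (a2,b2)"
    using i j by (simp add: reduce_mid_def sum_product)
  also have "\<dots> = kron ?A ?A $$ (i,j)"
    unfolding i(3) j(3) by (rule index_kron[OF A A i(1,2) j(1,2), symmetric])
  finally show "reduce_mid b (a * a) b (kron (swap_mat a b \<rho>) \<rho>) $$ (i,j) = kron ?A ?A $$ (i,j)" .
qed (auto simp: reduce_mid_def kron_def)

lemma hermitian_reduce_mid:
  assumes H: "hermitian_mat (a * b) \<rho>"
  shows "hermitian_mat a (reduce_mid 1 a b \<rho>)"
proof (rule hermitian_matI)
  fix i j assume ij: "i < a" "j < a"
  have "reduce_mid 1 a b \<rho> $$ (j,i) = (\<Sum>c<b. \<rho> $$ (j * b + c, i * b + c))"
    using ij by (simp add: reduce_mid_def)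
  also have "\<dots> = (\<Sum>c<b. cnj (\<rho> $$ (i * b + c, j * b + c)))"
    using ij by (intro sum.cong refl hermitian_mat_index[OF H] mult_add_less_mult) auto
  also have "\<dots> = cnj (reduce_mid 1 a b \<rho> $$ (i,j))"
    using ij by (simp add: reduce_mid_def)
  finally show "reduce_mid 1 a b \<rho> $$ (j,i) = cnj (reduce_mid 1 a b \<rho> $$ (i,j))" .
qed (simp add: reduce_mid_def)

definition mid_disturbances :: "nat \<Rightarrow> nat \<Rightarrow> nat \<Rightarrow> complex mat \<Rightarrow> complex mat \<Rightarrow> real set" where
  "mid_disturbances d1 d d4 S \<tau> =
     {hs_norm_sq (S - meas_mid d1 d d4 P S) | P. vN_measurement d P \<and> meas_mid 1 d 1 P \<tau> = \<tau>}"

lemma N_H_eq_Sup: "N_H dA dB \<rho> = Sup (mid_disturbances 1 dA dB (msqrt (dA * dB) \<rho>) (reduce_mid 1 dA dB \<rho>))"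
  unfolding N_H_def mid_disturbances_def Let_def ..

lemma N_H_b_eq_Sup:
  "N_H_b d1 d2 d3 d4 \<sigma> =
     Sup (mid_disturbances d1 (d2 * d3) d4 (msqrt (d1 * d2 * d3 * d4) \<sigma>) (reduce_mid d1 (d2 * d3) d4 \<sigma>))"
  unfolding N_H_b_def mid_disturbances_def Let_def ..

lemma mid_disturbances_nonempty:
  assumes "hermitian_mat d \<tau>"
  shows "mid_disturbances d1 d d4 S \<tau> \<noteq> {}"
proof -
  obtain P where "vN_measurement d P" "meas_mid 1 d 1 P \<tau> = \<tau>"
    by (rule exists_vN_measurement_fixing[OF assms])
  then show ?thesis unfolding mid_disturbances_def by blast
qed

lemma bdd_above_mid_disturbances:
  "S \<in> carrier_mat (d1 * d * d4) (d1 * d * d4) \<Longrightarrow> bdd_above (mid_disturbances d1 d d4 S \<tau>)"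
  unfolding mid_disturbances_def by (rule bdd_aboveI[of _ "hs_norm_sq S"]) (auto intro: hs_norm_sq_diff_meas_mid_le)

lemma msqrt_kron_swap:
  assumes P: "psd_mat (a * b) \<rho>"
  shows "msqrt (b * a * a * b) (kron (swap_mat a b \<rho>) \<rho>) = kron (swap_mat a b (msqrt (a * b) \<rho>)) (msqrt (a * b) \<rho>)"
proof -
  define R where "R = msqrt (a * b) \<rho>"
  have PR: "psd_mat (a * b) R" and RR: "R * R = \<rho>" unfolding R_def by (rule msqrt_psd_square[OF P])+
  have R: "R \<in> carrier_mat (a * b) (a * b)" by (rule psd_mat_carrier[OF PR])
  obtain u l where R1: "rank_one_sum (a * b) R {..<a * b} l (\<lambda>k i. u k $ i)"
    using psd_rank_one_sum[OF PR] .
  have "psd_mat (b * a * (a * b)) (kron (swap_mat a b R) R)"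
    by (rule rank_one_sum_psd[OF rank_one_sum_kron[OF rank_one_sum_swap_mat[OF R1] R1]])
  moreover have "kron (swap_mat a b R) R * kron (swap_mat a b R) R = kron (swap_mat a b \<rho>) \<rho>"
    using kron_mult_kron[OF carrier_swap_mat R carrier_swap_mat R] swap_mat_mult[OF R R] RR by simp
  ultimately show ?thesis unfolding R_def[symmetric] by (intro msqrt_eqI) (simp_all add: ac_simps)
qed

text \<open>Measuring the middle factor of \<open>X \<otimes> R\<close> in a product basis \<open>u\<^sub>k \<otimes> u\<^sub>l\<close> acts as the
  measurement in \<open>u\<close> on each tensor factor, and the disturbance splits orthogonally.\<close>

lemma hs_norm_sq_diff_meas_mid_kron:
  fixes a d1 d4 :: nat
  assumes ob: "orthonormal_basis a u" and P: "\<forall>k<a. P k = proj (u k)"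
    and X: "X \<in> carrier_mat (d1 * a) (d1 * a)" and R: "R \<in> carrier_mat (a * d4) (a * d4)"
  shows "hs_norm_sq (kron X R - meas_mid d1 (a * a) d4 (\<lambda>m. proj (prod_basis a u m)) (kron X R))
       = hs_norm_sq X * hs_norm_sq (R - meas_mid 1 a d4 P R)
         + hs_norm_sq (kron (X - meas_mid d1 a 1 P X) (meas_mid 1 a d4 P R))"
proof -
  define X' where "X' = meas_mid d1 a 1 P X"
  define R' where "R' = meas_mid 1 a d4 P R"
  have X': "X' \<in> carrier_mat (d1 * a) (d1 * a)" unfolding X'_def using carrier_meas_mid[of d1 a 1] by simp
  have R': "R' \<in> carrier_mat (a * d4) (a * d4)" unfolding R'_def using carrier_meas_mid[of 1 a d4] by simp
  have RR': "R - R' \<in> carrier_mat (a * d4) (a * d4)" using R' by (rule minus_carrier_mat)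
  have XX': "X - X' \<in> carrier_mat (d1 * a) (d1 * a)" using X' by (rule minus_carrier_mat)
  have "vN_measurement a P" unfolding vN_measurement_def using ob P by blast
  moreover have "R \<in> carrier_mat (1 * a * d4) (1 * a * d4)" using R by simp
  ultimately have orth: "hs_inner (R - R') R' = 0"
    unfolding R'_def by (rule hs_inner_diff_meas_mid)
  have "kron X R - meas_mid d1 (a * a) d4 (\<lambda>m. proj (prod_basis a u m)) (kron X R)
      = kron X (R - R') + kron (X - X') R'"
    unfolding meas_mid_kron[OF ob P X R] X'_def[symmetric] R'_def[symmetric]
    by (rule kron_diff_kron[OF X X' R R'])
  then have "hs_norm_sq (kron X R - meas_mid d1 (a * a) d4 (\<lambda>m. proj (prod_basis a u m)) (kron X R))
      = hs_norm_sq (kron X (R - R')) + hs_norm_sq (kron (X - X') R')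
        + 2 * Re (hs_inner (kron X (R - R')) (kron (X - X') R'))"
    using hs_norm_sq_add[OF carrier_kron[OF X RR'] carrier_kron[OF XX' R']] by simp
  also have "hs_inner (kron X (R - R')) (kron (X - X') R') = 0"
    unfolding hs_inner_kron[OF X RR' XX' R'] orth by simp
  also have "hs_norm_sq (kron X (R - R')) = hs_norm_sq X * hs_norm_sq (R - R')"
    by (rule hs_norm_sq_kron[OF X RR'])
  finally show ?thesis by (simp add: X'_def R'_def)
qed

lemma mid_disturbances_kron_dominate:
  fixes a d1 d4 :: nat
  assumes X: "X \<in> carrier_mat (d1 * a) (d1 * a)" and X1: "hs_norm_sq X = 1"
    and R: "R \<in> carrier_mat (a * d4) (a * d4)" and \<tau>: "\<tau> \<in> carrier_mat a a"
    and x: "x \<in> mid_disturbances 1 a d4 R \<tau>"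
  shows "\<exists>y \<in> mid_disturbances d1 (a * a) d4 (kron X R) (kron \<tau> \<tau>). x \<le> y"
proof -
  obtain P where vN: "vN_measurement a P" and inv: "meas_mid 1 a 1 P \<tau> = \<tau>"
    and xP: "x = hs_norm_sq (R - meas_mid 1 a d4 P R)"
    using x unfolding mid_disturbances_def by auto
  obtain u where ob: "orthonormal_basis a u" and Pu: "\<forall>k<a. P k = proj (u k)"
    using vN unfolding vN_measurement_def by blast
  define Q where "Q = (\<lambda>m. proj (prod_basis a u m))"
  have "vN_measurement (a * a) Q"
    unfolding vN_measurement_def Q_def using orthonormal_basis_prod_basis[OF ob] by blast
  moreover have "meas_mid 1 (a * a) 1 Q (kron \<tau> \<tau>) = kron \<tau> \<tau>"
  proof -
    have "\<tau> \<in> carrier_mat (1 * a) (1 * a)" "\<tau> \<in> carrier_mat (a * 1) (a * 1)" using \<tau> by simp_all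
    from meas_mid_kron[OF ob Pu this] show ?thesis using inv by (simp add: Q_def)
  qed
  ultimately have "hs_norm_sq (kron X R - meas_mid d1 (a * a) d4 Q (kron X R))
      \<in> mid_disturbances d1 (a * a) d4 (kron X R) (kron \<tau> \<tau>)"
    unfolding mid_disturbances_def by blast
  moreover have "x \<le> hs_norm_sq (kron X R - meas_mid d1 (a * a) d4 Q (kron X R))"
    unfolding Q_def hs_norm_sq_diff_meas_mid_kron[OF ob Pu X R] X1 xP
    using hs_norm_sq_nonneg by simp
  ultimately show ?thesis by blast
qed

theorem mainTheorem3:
  fixes dA dB :: nat and \<rho> :: "complex mat"
  assumes "density_mat (dA * dB) \<rho>"
  shows "N_H_b dB dA dA dB (kron (swap_mat dA dB \<rho>) \<rho>) \<ge> N_H dA dB \<rho>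
       \<and> (N_H dA dB \<rho> > 0 \<longrightarrow> N_H_b dB dA dA dB (kron (swap_mat dA dB \<rho>) \<rho>) > 0)"
proof -
  have P: "psd_mat (dA * dB) \<rho>" and tr: "mtrace \<rho> = 1" using assms by (auto simp: density_mat_def)
  have \<rho>: "\<rho> \<in> carrier_mat (dA * dB) (dA * dB)" by (rule psd_mat_carrier[OF P])
  define R where "R = msqrt (dA * dB) \<rho>"
  define \<rho>A where "\<rho>A = reduce_mid 1 dA dB \<rho>"
  have R: "R \<in> carrier_mat (dA * dB) (dA * dB)"
    unfolding R_def by (rule psd_mat_carrier[OF msqrt_psd_square(1)[OF P]])
  have X1: "hs_norm_sq (swap_mat dA dB R) = 1"
    using hs_norm_sq_swap_mat[OF R] hs_norm_sq_msqrt[OF P] tr by (simp add: R_def)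
  have "N_H dA dB \<rho> \<le> N_H_b dB dA dA dB (kron (swap_mat dA dB \<rho>) \<rho>)"
    unfolding N_H_eq_Sup N_H_b_eq_Sup msqrt_kron_swap[OF P] reduce_mid_kron_swap[OF \<rho>]
      R_def[symmetric] \<rho>A_def[symmetric]
  proof (rule cSup_mono)
    show "mid_disturbances 1 dA dB R \<rho>A \<noteq> {}"
      unfolding \<rho>A_def by (intro mid_disturbances_nonempty hermitian_reduce_mid psd_mat_hermitian P)
    show "bdd_above (mid_disturbances dB (dA * dA) dB (kron (swap_mat dA dB R) R) (kron \<rho>A \<rho>A))"
      using carrier_kron[OF carrier_swap_mat[of dA dB R] R]
      by (intro bdd_above_mid_disturbances) (simp add: ac_simps)
    show "\<exists>y \<in> mid_disturbances dB (dA * dA) dB (kron (swap_mat dA dB R) R) (kron \<rho>A \<rho>A). x \<le> y"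
      if "x \<in> mid_disturbances 1 dA dB R \<rho>A" for x
      using that by (intro mid_disturbances_kron_dominate[OF carrier_swap_mat X1 R]) (simp add: \<rho>A_def reduce_mid_def)
  qed
  then show ?thesis by linarith
qed

end
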